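(* For all complex $k_1,k_2,\dots$ and $k'_1,\dots$, and indices such that all roots involved have indices in $\{1,\dots,n-1\}$ (with $l\ge1$, $m\ge0$ where applicable): (1) $f_{i\cdots i+l-1}[k_1,\dots,k_{l-1}]*f_{i+l\cdots i+l+m}[k_{l+1},\dots,k_{l+m}]=f_{i\cdots i+l+m}[k_1,\dots,k_{l-1},-1,k_{l+1},\dots,k_{l+m}]$; (2) $f_{i+l\cdots i+l+m}[k_{l+1},\dots,k_{l+m}]*f_{i\cdots i+l-1}[k_1,\dots,k_{l-1}]=f_{i\cdots i+l+m}[k_1,\dots,k_{l-1},0,k_{l+1},\dots,k_{l+m}]$; (3) for $m\ge1$: $f_i*f_{i\cdots i+m}[k_1,k_2,\dots,k_m]=f_{i\cdots i+m}[k_1-1,k_2,\dots,k_m]*f_i$; (4) for $m\ge1$: $f_{i+m}*f_{i\cdots i+m}[k_1,\dots,k_{m-1},k_m-1]=f_{i\cdots i+m}[k_1,\dots,k_{m-1},k_m]*f_{i+m}$; (5) if $i+m+1<j$: $f_{i\cdots i+m}[k_1,\dots,k_m]*f_{j\cdots j+l}[k'_1,\dots,k'_l]=f_{j\cdots j+l}[k'_1,\dots,k'_l]*f_{i\cdots i+m}[k_1,\dots,k_m]$.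
   Context: Fix an integer $n\ge2$, an integer $r>0$, a real $0<x<1$ and a complex parameter $\delta$. Let $[u]=x^{u^2/r-u}\Theta_{x^{2r}}(x^{2u})$, $\Theta_q(z)=(z;q)_\infty(q/z;q)_\infty(q;q)_\infty$. A function of type $(a_1,\dots,a_{n-1})$ ($a_j\in\mathbb Z_{\ge0}$) is a function of variables $u^{(b)}_j$ ($1\le j\le n-1$, $1\le b\le a_j$) and $\kappa_1,\dots,\kappa_{n-1}$, symmetric in $(u^{(1)}_j,\dots,u^{(a_j)}_j)$ for each $j$. For $f$ of type $(a_j)$ and $g$ of type $(b_j)$, $f*g$ is of type $(a_j+b_j)$: $(f*g)=S\Big(f(u;\kappa_1+(b_0-2b_1+b_2)\delta,\dots,\kappa_{n-1}+(b_{n-2}-2b_{n-1}+b_n)\delta)\,g(v;\kappa)\prod_{j,a\le a_j,b\le b_j}\frac{[u^{(a)}_j-v^{(b)}_j-\delta]}{[u^{(a)}_j-v^{(b)}_j]}\prod_{1\le j\le n-2,a\le a_j,b\le b_{j+1}}\frac{[u^{(a)}_j-v^{(b)}_{j+1}+\frac\delta2]}{[u^{(a)}_j-v^{(b)}_{j+1}]}\prod_{2\le j\le n-1,a\le a_j,b\le b_{j-1}}\frac{[u^{(a)}_j-v^{(b)}_{j-1}+\frac\delta2]}{[u^{(a)}_j-v^{(b)}_{j-1}]}\Big)$, $b_0=b_n=0$, $S$ = average over permutations of $(u^{(1)}_j,\dots,u^{(a_j)}_j,v^{(1)}_j,\dots,v^{(b_j)}_j)$ for each $j$. For $1\le i\le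 i+m\le n-1$ and $k_1,\dots,k_m\in\mathbb C$ (with $k_0=-1$, $k_{m+1}=0$), $f_{i\cdots i+m}[k_1,\dots,k_m]$ is the function of type $(a_j)$, $a_j=1$ for $i\le j\le i+m$ and $0$ otherwise, equal to $\prod_{j=1}^m\frac{[u_{i+j-1}-u_{i+j}-(k_j+\frac12)\delta]}{[u_{i+j-1}-u_{i+j}]}\prod_{j=0}^m[u_{i+j}-(k_j-k_{j+1}+\frac12)\delta-\kappa_{i+j}]$; for $m=0$ it is $f_i=[u_i+\frac\delta2-\kappa_i]$ (with no bracket arguments). *)

theory Defs
  imports "HOL-Analysis.Analysis" "HOL-Combinatorics.Permutations"
begin

definition qpoch :: "complex \<Rightarrow> complex \<Rightarrow> complex" where
  "qpoch z q = prodinf (\<lambda>k::nat. 1 - z * q ^ k)"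

definition theta :: "complex \<Rightarrow> complex \<Rightarrow> complex" where
  "theta q z = qpoch z q * qpoch (q / z) q * qpoch q q"

definition brk :: "real \<Rightarrow> nat \<Rightarrow> complex \<Rightarrow> complex" where
  "brk x r u = exp ((u ^ 2 / of_nat r - u) * of_real (ln x))
      * theta (of_real (x ^ (2 * r))) (exp (2 * u * of_real (ln x)))"

text \<open>A function of type (a_j): a pair of the type a (a_j for 1 <= j <= n-1, 0 elsewhere)
  and the function itself, taking variables u j b (1 <= b <= a j) and kappa j.\<close>
type_synonym tfun = "(nat \<Rightarrow> nat) \<times> ((nat \<Rightarrow> nat \<Rightarrow> complex) \<Rightarrow> (nat \<Rightarrow> complex) \<Rightarrow> complex)"

definition perms_tuple :: "nat \<Rightarrow> (nat \<Rightarrow> nat) \<Rightarrow> (nat \<Rightarrow> nat \<Rightarrow> nat) set" where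
  "perms_tuple n c = PiE {1..n-1} (\<lambda>j. {p. p permutes {1..c j}})"

definition star_integrand ::
  "nat \<Rightarrow> real \<Rightarrow> nat \<Rightarrow> complex \<Rightarrow> tfun \<Rightarrow> tfun \<Rightarrow>
     (nat \<Rightarrow> nat \<Rightarrow> complex) \<Rightarrow> (nat \<Rightarrow> complex) \<Rightarrow> complex" where
  "star_integrand n x r \<delta> F G w \<kappa> =
    (let a = fst F; b = fst G;
         b' = (\<lambda>j. if 1 \<le> j \<and> j \<le> n - 1 then b j else 0);
         \<kappa>' = (\<lambda>j. \<kappa> j + (of_nat (b' (j - 1)) - 2 * of_nat (b' j) + of_nat (b' (j + 1))) * \<delta>);
         u = (\<lambda>j s. w j s);
         v = (\<lambda>j t. w j (a j + t))
     in snd F u \<kappa>' * snd G v \<kappa>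
        * (\<Prod>j\<in>{1..n-1}. \<Prod>s\<in>{1..a j}. \<Prod>t\<in>{1..b j}.
             brk x r (u j s - v j t - \<delta>) / brk x r (u j s - v j t))
        * (\<Prod>j\<in>{1..n-2}. \<Prod>s\<in>{1..a j}. \<Prod>t\<in>{1..b (j+1)}.
             brk x r (u j s - v (j+1) t + \<delta>/2) / brk x r (u j s - v (j+1) t))
        * (\<Prod>j\<in>{2..n-1}. \<Prod>s\<in>{1..a j}. \<Prod>t\<in>{1..b (j-1)}.
             brk x r (u j s - v (j-1) t + \<delta>/2) / brk x r (u j s - v (j-1) t)))"

definition star :: "nat \<Rightarrow> real \<Rightarrow> nat \<Rightarrow> complex \<Rightarrow> tfun \<Rightarrow> tfun \<Rightarrow> tfun" where
  "star n x r \<delta> F G =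
    (let c = (\<lambda>j. fst F j + fst G j)
     in (c, \<lambda>w \<kappa>. (\<Sum>\<sigma>\<in>perms_tuple n c.
            star_integrand n x r \<delta> F G
              (\<lambda>j t. if 1 \<le> j \<and> j \<le> n - 1 then w j (\<sigma> j t) else w j t) \<kappa>)
          / of_nat (card (perms_tuple n c))))"

text \<open>f_{i...i+m}[k_1,...,k_m] with m = length ks, k_0 = -1, k_{m+1} = 0.
  For ks = [] this is f_i = [u_i + delta/2 - kappa_i].\<close>
definition fchain :: "real \<Rightarrow> nat \<Rightarrow> complex \<Rightarrow> nat \<Rightarrow> complex list \<Rightarrow> tfun" where
  "fchain x r \<delta> i ks =
    (let m = length ks;
         kk = (\<lambda>j. if j = 0 then -1 else if j \<le> m then ks ! (j - 1) else 0)
     in (\<lambda>j. if i \<le> j \<and> j \<le> i + m then 1 else 0,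
         \<lambda>u \<kappa>. (\<Prod>j\<in>{1..m}. brk x r (u (i+j-1) 1 - u (i+j) 1 - (kk j + 1/2) * \<delta>)
                              / brk x r (u (i+j-1) 1 - u (i+j) 1))
              * (\<Prod>j\<in>{0..m}. brk x r (u (i+j) 1 - (kk j - kk (j+1) + 1/2) * \<delta> - \<kappa> (i+j)))))"

definition generic :: "nat \<Rightarrow> real \<Rightarrow> nat \<Rightarrow> (nat \<Rightarrow> nat) \<Rightarrow> (nat \<Rightarrow> nat \<Rightarrow> complex) \<Rightarrow> bool" where
  "generic n x r c w \<longleftrightarrow>
    (\<forall>j j' s t. j \<in> {1..n-1} \<longrightarrow> j' \<in> {1..n-1} \<longrightarrow> (j' = j \<or> j' = j + 1 \<or> j = j' + 1)
       \<longrightarrow> s \<in> {1..c j} \<longrightarrow> t \<in> {1..c j'} \<longrightarrow> (j, s) \<noteq> (j', t)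
       \<longrightarrow> brk x r (w j s - w j' t) \<noteq> 0)"

text \<open>Equality of functions of a given type, as meromorphic functions:
  same type and equal values at all generic points, for all kappa.\<close>
definition teq :: "nat \<Rightarrow> real \<Rightarrow> nat \<Rightarrow> tfun \<Rightarrow> tfun \<Rightarrow> bool" where
  "teq n x r F G \<longleftrightarrow> fst F = fst G \<and>
     (\<forall>w \<kappa>. generic n x r (fst F) w \<longrightarrow> snd F w \<kappa> = snd G w \<kappa>)"

end

theory Submission
  imports Defs "HOL-Complex_Analysis.Complex_Analysis"
begin

text \<open>
  Relations (1), (2) and (5) are bookkeeping: when no colour occurs in both factors, the
  symmetrisation in \<open>f * g\<close> is trivial and the product is the product of the two chains times
  the cross factor of the single adjacent pair (if any), which is exactly the link that glues
  the two chains into one.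

  In (3) and (4) one colour occurs twice, so both sides are averages of an integrand over the
  swap of the two variables of that colour. The two integrands share all factors but five, and
  the difference of these five-fold products is antisymmetric under the swap; this is the
  Weierstrass three-term identity
  \<open>[a+b][a-b][c+d][c-d] - [a+c][a-c][b+d][b-d] + [a+d][a-d][b+c][b-c] = 0\<close>
  after a linear change of variables. That identity reduces to one for \<open>\<Theta>\<^sub>q\<close>: as functions
  of \<open>X\<close>, the three-term expression \<open>I X\<close> and \<open>D X = \<Theta>(XY) \<Theta>(X/Y)\<close> pick up the same factor
  under \<open>X \<mapsto> qX\<close>, and the zeros of \<open>D\<close> are simple and are zeros of \<open>I\<close>. So \<open>I / D\<close> extends to a
  bounded entire function of \<open>log X\<close>, constant by Liouville, and zero because \<open>I U = 0\<close>. The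
  genericity of \<open>Y\<close> needed for the simplicity of the zeros is removed by analytic continuation.

  All relations are proved for all arguments.
\<close>

section \<open>Theta functions\<close>

lemma mult_powi_invariant:
  fixes q :: "'a :: field"
  assumes "q \<noteq> 0" and shift: "\<And>X. X \<noteq> 0 \<Longrightarrow> P (q * X) \<longleftrightarrow> P X" and "X \<noteq> 0"
  shows "P (q powi k * X) \<longleftrightarrow> P X"
proof -
  have pow: "P (q ^ n * Y) \<longleftrightarrow> P Y" if "Y \<noteq> 0" for n Y
  proof (induction n)
    case (Suc n)
    have "P (q ^ Suc n * Y) \<longleftrightarrow> P (q * (q ^ n * Y))" by (simp add: mult_ac)
    also have "\<dots> \<longleftrightarrow> P (q ^ n * Y)" using assms(1) that by (intro shift) auto
    finally show ?case using Suc by simp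
  qed simp
  show ?thesis
  proof (cases "k \<ge> 0")
    case True
    then show ?thesis using pow[OF \<open>X \<noteq> 0\<close>, of "nat k"] by (simp add: power_int_def)
  next
    case False
    define Y where "Y = q powi k * X"
    have "Y \<noteq> 0" "X = q ^ nat (- k) * Y"
      using assms False by (simp_all add: Y_def power_int_def field_simps)
    then have "P X \<longleftrightarrow> P Y" using pow by simp
    then show ?thesis unfolding Y_def by simp
  qed
qed

locale theta_nome =
  fixes q :: complex
  assumes norm_q: "norm q < 1" and q_nonzero: "q \<noteq> 0"
begin

interpretation qpoch: weierstrass_product "\<lambda>n. 1 / q ^ n" "\<lambda>_. 0"
proof
  show "filterlim (\<lambda>n. 1 / q ^ n) at_infinity at_top"
  proof -
    have "1 < norm (1 / q)" using norm_q q_nonzero by (simp add: norm_divide)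
    then show ?thesis
      unfolding power_one_over[symmetric] by (rule filterlim_realpow_sequentially_gt1)
  qed
  show "summable (\<lambda>n. (r / norm (1 / q ^ n)) ^ Suc 0)" for r
    using norm_q by (simp add: norm_divide norm_power summable_geometric)
qed (use q_nonzero in simp)

lemma qpoch_eq_weierstrass_product: "qpoch z q = qpoch.f z"
  by (simp add: qpoch_def qpoch.f_def weierstrass_factor_def)

lemma convergent_prod_qpoch: "convergent_prod (\<lambda>k. 1 - z * q ^ k)"
  using qpoch.convergent[of z] by (simp add: weierstrass_factor_def)

lemma qpoch_eq_0_iff: "qpoch z q = 0 \<longleftrightarrow> (\<exists>k. z * q ^ k = 1)"
  using qpoch.zero[of z] q_nonzero
  by (auto simp: qpoch_eq_weierstrass_product field_simps)

lemma holomorphic_qpoch [holomorphic_intros]: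
  "f holomorphic_on A \<Longrightarrow> (\<lambda>z. qpoch (f z) q) holomorphic_on A"
  using holomorphic_on_compose[of f A qpoch.f] qpoch.holomorphic
  by (simp add: qpoch_eq_weierstrass_product o_def)

lemma qpoch_eq_head: "qpoch z q = (1 - z) * qpoch (z * q) q"
proof (cases "z = 1")
  case True
  then have "qpoch z q = 0" using qpoch_eq_0_iff[of z] by (metis mult_1_right power_0)
  then show ?thesis using True by simp
next
  case False
  have "(\<Prod>k. 1 - z * q ^ Suc k) = qpoch z q / (1 - z)"
    using prodinf_split_head[OF convergent_prod_qpoch[of z]] False by (simp add: qpoch_def)
  then show ?thesis using False by (simp add: qpoch_def field_simps)
qed

lemma qpoch_self_nonzero: "qpoch q q \<noteq> 0"
proof
  assume "qpoch q q = 0"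
  then obtain k where "q * q ^ k = 1" using qpoch_eq_0_iff by blast
  then have "norm q ^ Suc k = 1" by (metis norm_one norm_power power_Suc)
  moreover have "norm q ^ Suc k < 1"
    using norm_q q_nonzero by (intro power_Suc_less_one) auto
  ultimately show False by simp
qed

lemma theta_eq_one_minus: "theta q z = (1 - z) * (qpoch (z * q) q * qpoch (q / z) q * qpoch q q)"
  unfolding theta_def qpoch_eq_head[of z] by simp

lemma theta_mult_q:
  assumes "z \<noteq> 0"
  shows "theta q (q * z) = - (1 / z) * theta q z"
proof -
  have "theta q (q * z) = qpoch (q * z) q * ((1 - 1 / z) * qpoch (q / z) q) * qpoch q q"
    using qpoch_eq_head[of "1 / z"] assms q_nonzero by (simp add: theta_def)
  then show ?thesis
    using assms by (simp add: theta_eq_one_minus[of z] field_simps)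
qed

lemma theta_inverse:
  assumes "z \<noteq> 0"
  shows "theta q (1 / z) = - (1 / z) * theta q z"
proof -
  have "theta q (1 / z) = (1 - 1 / z) * qpoch (q / z) q * qpoch (q * z) q * qpoch q q"
    using qpoch_eq_head[of "1 / z"] assms by (simp add: theta_def)
  then show ?thesis
    using assms by (simp add: theta_eq_one_minus[of z] field_simps)
qed

lemma theta_1: "theta q 1 = 0"
  by (simp add: theta_eq_one_minus)

lemma theta_eq_0_imp_powi:
  assumes "z \<noteq> 0" "theta q z = 0"
  shows "\<exists>k::int. z = q powi k"
proof -
  have "qpoch z q = 0 \<or> qpoch (q / z) q = 0"
    using assms qpoch_self_nonzero by (auto simp: theta_def)
  then obtain k where "z * q ^ k = 1 \<or> q / z * q ^ k = 1"
    by (auto simp: qpoch_eq_0_iff)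
  then have "z = q powi (- int k) \<or> z = q ^ Suc k"
    using assms q_nonzero by (auto simp: power_int_minus field_simps)
  then show ?thesis by (metis power_int_of_nat)
qed

lemma holomorphic_theta [holomorphic_intros]:
  "f holomorphic_on A \<Longrightarrow> (\<And>z. z \<in> A \<Longrightarrow> f z \<noteq> 0) \<Longrightarrow> (\<lambda>z. theta q (f z)) holomorphic_on A"
  unfolding theta_def by (intro holomorphic_intros) auto

lemma theta_has_field_derivative:
  assumes "z \<noteq> 0"
  shows "(theta q has_field_derivative deriv (theta q) z) (at z)"
proof -
  have "theta q holomorphic_on - {0}"
    using holomorphic_theta[of "\<lambda>z. z" "- {0}"] by simp
  then have "theta q field_differentiable at z"
    using assms by (intro holomorphic_on_imp_differentiable_at) auto
  then show ?thesis by (simp add: DERIV_deriv_iff_field_differentiable)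
qed

lemma theta_comp_has_field_derivative:
  assumes "(f has_field_derivative f') (at X)" "f X \<noteq> 0"
  shows "((\<lambda>x. theta q (f x)) has_field_derivative deriv (theta q) (f X) * f') (at X)"
  using DERIV_chain2[OF theta_has_field_derivative[OF assms(2)] assms(1)] .

lemma deriv_theta_1: "deriv (theta q) 1 = - (qpoch q q ^ 3)"
proof -
  define R where "R z = qpoch (z * q) q * qpoch (q / z) q * qpoch q q" for z
  have "R holomorphic_on - {0}"
    unfolding R_def by (intro holomorphic_intros) auto
  then have "R field_differentiable at 1"
    by (rule holomorphic_on_imp_differentiable_at) auto
  then obtain R' where "(R has_field_derivative R') (at 1)"
    using field_differentiable_def by blast
  then have "((\<lambda>z. (1 - z) * R z) has_field_derivative - R 1) (at 1)"
    by (auto intro!: derivative_eq_intros)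
  moreover have "theta q = (\<lambda>z. (1 - z) * R z)"
    by (simp add: fun_eq_iff theta_eq_one_minus R_def)
  ultimately show ?thesis
    by (simp add: DERIV_imp_deriv R_def power3_eq_cube)
qed

lemma deriv_theta_mult_q:
  assumes "z \<noteq> 0"
  shows "q * deriv (theta q) (q * z) = theta q z / z^2 - deriv (theta q) z / z"
proof -
  have "((\<lambda>w. theta q (q * w)) has_field_derivative deriv (theta q) (q * z) * q) (at z)"
    using assms q_nonzero
    by (intro theta_comp_has_field_derivative) (auto intro!: derivative_eq_intros)
  moreover have "((\<lambda>w. theta q (q * w)) has_field_derivative theta q z / z^2 - deriv (theta q) z / z) (at z)"
  proof (rule has_field_derivative_transform_within_open[where S = "- {0}"])
    show "((\<lambda>w. - (1 / w) * theta q w) has_field_derivative theta q z / z^2 - deriv (theta q) z / z) (at z)"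
      using theta_has_field_derivative[OF assms] assms
      by (auto intro!: derivative_eq_intros simp: power2_eq_square field_simps)
  qed (use assms theta_mult_q in auto)
  ultimately show ?thesis by (metis DERIV_unique mult.commute)
qed

lemma theta_zero_simple:
  assumes "z \<noteq> 0" "theta q z = 0"
  shows "deriv (theta q) z \<noteq> 0"
proof -
  obtain k where k: "z = q powi k * 1" using theta_eq_0_imp_powi[OF assms] by auto
  let ?P = "\<lambda>z. theta q z = 0 \<and> deriv (theta q) z \<noteq> 0"
  have "?P (q powi k * 1) \<longleftrightarrow> ?P 1"
  proof (rule mult_powi_invariant[OF q_nonzero])
    show "?P (q * X) \<longleftrightarrow> ?P X" if "X \<noteq> 0" for X
      using theta_mult_q[OF that] deriv_theta_mult_q[OF that] that q_nonzero by auto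
  qed simp
  then show ?thesis
    using theta_1 deriv_theta_1 qpoch_self_nonzero k by simp
qed

lemma theta_nonzero: "z \<noteq> 0 \<Longrightarrow> (\<And>k. z \<noteq> q powi k) \<Longrightarrow> theta q z \<noteq> 0"
  using theta_eq_0_imp_powi by blast

lemma theta_pair_mult_q:
  assumes "X \<noteq> 0" "c \<noteq> 0"
  shows "theta q (q * X * c) * theta q (q * X / c) = theta q (X * c) * theta q (X / c) / X^2"
  using theta_mult_q[of "X * c"] theta_mult_q[of "X / c"] assms
  by (simp add: mult.assoc power2_eq_square)

lemma theta_pair_inverse:
  assumes "X \<noteq> 0" "c \<noteq> 0"
  shows "theta q (c / X) * theta q (1 / (X * c)) = theta q (X * c) * theta q (X / c) / X^2"
  using theta_inverse[of "X / c"] theta_inverse[of "X * c"] assms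
  by (simp add: power2_eq_square)

end

lemma exists_powi_in_annulus:
  fixes q z :: complex
  assumes "0 < norm q" "norm q < 1" "z \<noteq> 0"
  obtains k :: int where "norm q \<le> norm (q powi k * z)" "norm (q powi k * z) \<le> 1"
proof
  define L where "L = ln (norm z) / ln (norm q)"
  define k where "k = - \<lfloor>L\<rfloor>"
  have lnq: "ln (norm q) < 0" using assms by simp
  have "norm (q powi k * z) = norm q powr real_of_int k * norm z"
    using assms by (simp add: norm_mult norm_power_int powr_real_of_int')
  also have "\<dots> = exp (real_of_int k * ln (norm q) + ln (norm z))"
    using assms by (simp add: powr_def exp_add)
  also have "real_of_int k * ln (norm q) + ln (norm z) = ln (norm q) * (L - \<lfloor>L\<rfloor>)"
    using lnq by (simp add: k_def L_def field_simps)
  finally have norm_eq: "norm (q powi k * z) = exp (ln (norm q) * (L - \<lfloor>L\<rfloor>))" .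
  have frac: "0 \<le> L - \<lfloor>L\<rfloor>" "L - \<lfloor>L\<rfloor> \<le> 1" by linarith+
  have "ln (norm q) \<le> ln (norm q) * (L - \<lfloor>L\<rfloor>)"
    using lnq frac by (simp add: mult_le_cancel_left1)
  then show "norm q \<le> norm (q powi k * z)"
    using assms norm_eq by (metis exp_le_cancel_iff exp_ln)
  have "ln (norm q) * (L - \<lfloor>L\<rfloor>) \<le> 0"
    using lnq frac by (simp add: mult_nonpos_nonneg)
  then show "norm (q powi k * z) \<le> 1"
    using norm_eq by simp
qed

section \<open>The three-term identity for theta functions\<close>

definition theta_three_term :: "complex \<Rightarrow> complex \<Rightarrow> complex \<Rightarrow> complex \<Rightarrow> complex \<Rightarrow> complex" where
  "theta_three_term q X Y U V =
      Y * theta q (X * Y) * theta q (X / Y) * theta q (U * V) * theta q (U / V)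
    - U * theta q (X * U) * theta q (X / U) * theta q (Y * V) * theta q (Y / V)
    + U * theta q (X * V) * theta q (X / V) * theta q (Y * U) * theta q (Y / U)"

locale theta_quotient = theta_nome +
  fixes Y U V :: complex
  assumes Y_nonzero: "Y \<noteq> 0" and U_nonzero: "U \<noteq> 0" and V_nonzero: "V \<noteq> 0"
begin

definition I :: "complex \<Rightarrow> complex" where
  "I X = theta_three_term q X Y U V"

definition D :: "complex \<Rightarrow> complex" where
  "D X = theta q (X * Y) * theta q (X / Y)"

lemma I_mult_q: "X \<noteq> 0 \<Longrightarrow> I (q * X) = I X / X^2"
  using theta_pair_mult_q[of X Y] theta_pair_mult_q[of X U] theta_pair_mult_q[of X V]
    Y_nonzero U_nonzero V_nonzero
  by (simp add: I_def theta_three_term_def algebra_simps add_divide_distrib diff_divide_distrib)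

lemma D_mult_q: "X \<noteq> 0 \<Longrightarrow> D (q * X) = D X / X^2"
  using theta_pair_mult_q[of X Y] Y_nonzero by (simp add: D_def)

lemma I_inverse: "X \<noteq> 0 \<Longrightarrow> I (1 / X) = I X / X^2"
  using theta_pair_inverse[of X Y] theta_pair_inverse[of X U] theta_pair_inverse[of X V]
    Y_nonzero U_nonzero V_nonzero
  by (simp add: I_def theta_three_term_def algebra_simps add_divide_distrib diff_divide_distrib)

lemma I_Y: "I Y = 0"
  using Y_nonzero theta_1 by (simp add: I_def theta_three_term_def mult_ac)

lemma I_inverse_Y: "I (1 / Y) = 0"
  using I_inverse[of Y] I_Y Y_nonzero by simp

lemma I_U: "I U = 0"
proof -
  have "theta q (Y / U) = - (Y / U) * theta q (U / Y)"
    using theta_inverse[of "U / Y"] U_nonzero Y_nonzero by simp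
  then show ?thesis
    using U_nonzero theta_1 by (simp add: I_def theta_three_term_def mult_ac)
qed

lemma I_powi_mult_eq_0_iff: "X \<noteq> 0 \<Longrightarrow> I (q powi k * X) = 0 \<longleftrightarrow> I X = 0"
  by (rule mult_powi_invariant[OF q_nonzero]) (use I_mult_q in auto)

lemma holomorphic_I: "I holomorphic_on - {0}"
  unfolding I_def theta_three_term_def using Y_nonzero U_nonzero V_nonzero
  by (intro holomorphic_intros) auto

lemma holomorphic_D: "D holomorphic_on - {0}"
  unfolding D_def using Y_nonzero by (intro holomorphic_intros) auto

lemma D_has_field_derivative:
  assumes "X \<noteq> 0"
  shows "(D has_field_derivative
           Y * deriv (theta q) (X * Y) * theta q (X / Y) + theta q (X * Y) * deriv (theta q) (X / Y) / Y) (at X)"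
proof -
  have "((\<lambda>X. theta q (X * Y)) has_field_derivative deriv (theta q) (X * Y) * Y) (at X)"
    using assms Y_nonzero
    by (intro theta_comp_has_field_derivative) (auto intro!: derivative_eq_intros)
  moreover have "((\<lambda>X. theta q (X / Y)) has_field_derivative deriv (theta q) (X / Y) * (1 / Y)) (at X)"
    using assms Y_nonzero
    by (intro theta_comp_has_field_derivative) (auto intro!: derivative_eq_intros)
  ultimately show ?thesis
    unfolding D_def[abs_def] by (auto intro!: derivative_eq_intros simp: mult_ac)
qed

lemma D_eq_0_imp_I_eq_0:
  assumes "X \<noteq> 0" "D X = 0"
  shows "I X = 0"
proof -
  have "theta q (X * Y) = 0 \<or> theta q (X / Y) = 0"
    using assms by (simp add: D_def)
  then obtain k where "X * Y = q powi k \<or> X / Y = q powi k"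
    using theta_eq_0_imp_powi assms Y_nonzero by (metis divide_eq_0_iff mult_eq_0_iff)
  then have "X = q powi k * (1 / Y) \<or> X = q powi k * Y"
    using Y_nonzero by (auto simp: field_simps)
  then show ?thesis
    using I_powi_mult_eq_0_iff[of "1 / Y" k] I_powi_mult_eq_0_iff[of Y k] I_inverse_Y I_Y Y_nonzero
    by auto
qed

end

locale theta_quotient_generic = theta_quotient +
  assumes YY_generic: "\<And>k. Y * Y \<noteq> q powi k"
    and UY_generic: "\<And>k. U * Y \<noteq> q powi k"
    and U_div_Y_generic: "\<And>k. U / Y \<noteq> q powi k"
begin

lemma D_U_nonzero: "D U \<noteq> 0"
  using theta_nonzero[of "U * Y"] theta_nonzero[of "U / Y"] UY_generic U_div_Y_generic
    U_nonzero Y_nonzero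
  by (auto simp: D_def)

lemma deriv_D_nonzero:
  assumes "X \<noteq> 0" "D X = 0"
  shows "deriv D X \<noteq> 0"
proof -
  have not_both: "\<not> (theta q (X * Y) = 0 \<and> theta q (X / Y) = 0)"
  proof
    assume "theta q (X * Y) = 0 \<and> theta q (X / Y) = 0"
    then obtain j k where "X * Y = q powi j" "X / Y = q powi k"
      using theta_eq_0_imp_powi assms(1) Y_nonzero by (metis divide_eq_0_iff mult_eq_0_iff)
    then have "Y * Y = q powi (j - k)"
      using assms(1) Y_nonzero q_nonzero by (auto simp: power_int_diff field_simps)
    then show False using YY_generic by blast
  qed
  have "deriv D X = Y * deriv (theta q) (X * Y) * theta q (X / Y)
                    + theta q (X * Y) * deriv (theta q) (X / Y) / Y"
    using D_has_field_derivative[OF assms(1)] by (rule DERIV_imp_deriv)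
  then show ?thesis
    using assms not_both theta_zero_simple[of "X * Y"] theta_zero_simple[of "X / Y"] Y_nonzero
    by (auto simp: D_def)
qed

text \<open>At the (simple) zeros of \<open>D\<close> the value is the limit of \<open>I / D\<close> by l'Hopital's rule.\<close>
definition ratio :: "complex \<Rightarrow> complex" where
  "ratio X = (if D X = 0 then deriv I X / deriv D X else I X / D X)"

lemma D_nonzero_near:
  assumes "X \<noteq> 0"
  obtains e where "e > 0" "ball X e \<subseteq> - {0}" "\<And>z. z \<in> ball X e - {X} \<Longrightarrow> D z \<noteq> 0"
proof (cases "D X = 0")
  case True
  then show ?thesis
    using isolated_zeros[OF holomorphic_D _ _ _ True _ D_U_nonzero] assms U_nonzero that
    by (auto simp: connected_punctured_universe)
next
  case False
  obtain e where "e > 0" "\<And>y. dist X y < e \<Longrightarrow> D y \<noteq> 0"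
    using continuous_at_avoid[OF DERIV_isCont[OF D_has_field_derivative[OF assms]] False] by blast
  then show ?thesis
    using assms that[of "min e (norm X)"] by (auto simp: dist_norm)
qed

lemma quotient_tendsto_ratio:
  assumes "X \<noteq> 0"
  shows "((\<lambda>w. I w / D w) \<longlongrightarrow> ratio X) (at X)"
proof -
  have I': "(I has_field_derivative deriv I X) (at X)" and D': "(D has_field_derivative deriv D X) (at X)"
    using assms holomorphic_I holomorphic_D by (auto intro!: holomorphic_derivI[of _ "- {0}"])
  show ?thesis
  proof (cases "D X = 0")
    case True
    then show ?thesis
      using D_eq_0_imp_I_eq_0[OF assms True] deriv_D_nonzero[OF assms True]
      by (intro lhopital_complex_simple[OF I' D']) (auto simp: ratio_def)
  next
    case False
    then show ?thesis
      using DERIV_isCont[OF I'] DERIV_isCont[OF D'] by (auto intro!: tendsto_eq_intros simp: ratio_def isCont_def)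
  qed
qed

lemma ratio_field_differentiable:
  assumes "X \<noteq> 0"
  shows "ratio field_differentiable at X"
proof -
  obtain e where e: "e > 0" "ball X e \<subseteq> - {0}" "\<And>z. z \<in> ball X e - {X} \<Longrightarrow> D z \<noteq> 0"
    using D_nonzero_near[OF assms] by blast
  have "\<forall>\<^sub>F w in at X. w \<in> ball X e - {X}"
    using e(1) by (auto simp: eventually_at_filter eventually_nhds_metric dist_commute intro!: exI[of _ e])
  then have "\<forall>\<^sub>F w in at X. I w / D w = ratio w"
    by eventually_elim (use e in \<open>auto simp: ratio_def\<close>)
  then have "(ratio \<longlongrightarrow> ratio X) (at X within ball X e)"
    using quotient_tendsto_ratio[OF assms] by (auto intro: Lim_transform_eventually tendsto_within_subset)
  moreover have holo: "ratio holomorphic_on ball X e - {X}"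
    by (rule holomorphic_transform[of "\<lambda>w. I w / D w"])
       (use e in \<open>auto intro!: holomorphic_on_divide holomorphic_on_subset[OF holomorphic_I]
                     holomorphic_on_subset[OF holomorphic_D] simp: ratio_def\<close>)
  ultimately have "ratio holomorphic_on ball X e"
    by (intro no_isolated_singularity'[OF _ holo]) auto
  then show ?thesis
    by (rule holomorphic_on_imp_differentiable_at) (use e in auto)
qed

lemma holomorphic_ratio: "ratio holomorphic_on - {0}"
  using ratio_field_differentiable
  by (subst holomorphic_on_open) (auto simp: field_differentiable_def)

lemma ratio_mult_q:
  assumes "X \<noteq> 0"
  shows "ratio (q * X) = ratio X"
proof -
  define h where "h X = ratio (q * X) - ratio X" for X
  have "(ratio \<circ> (\<lambda>X. q * X)) holomorphic_on - {0}"
    using q_nonzero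
    by (intro holomorphic_on_compose holomorphic_intros holomorphic_on_subset[OF holomorphic_ratio]) auto
  then have holo_h: "h holomorphic_on - {0}"
    unfolding h_def by (intro holomorphic_intros holomorphic_ratio) (simp add: o_def)
  obtain e where e: "e > 0" "\<And>y. dist U y < e \<Longrightarrow> D y \<noteq> 0"
    using continuous_at_avoid[OF DERIV_isCont[OF D_has_field_derivative[OF U_nonzero]] D_U_nonzero]
    by auto
  define W where "W = ball U (min e (norm U))"
  have W: "y \<noteq> 0" "D y \<noteq> 0" if "y \<in> W" for y
    using that e by (auto simp: W_def dist_norm)
  have "h y = 0" if "y \<in> W" for y
    using W[OF that] D_mult_q[of y] I_mult_q[of y] by (simp add: h_def ratio_def)
  moreover have "U islimpt W"
    using e U_nonzero by (simp add: W_def islimpt_ball)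
  ultimately have "h X = 0"
    using analytic_continuation[OF holo_h _ connected_punctured_universe, of W U X] W U_nonzero assms
    by auto
  then show ?thesis by (simp add: h_def)
qed

lemma ratio_powi_mult: "X \<noteq> 0 \<Longrightarrow> ratio (q powi k * X) = ratio X"
  using mult_powi_invariant[OF q_nonzero, of "\<lambda>Z. ratio Z = ratio X"] ratio_mult_q by simp

lemma bounded_ratio: "bounded (ratio ` (- {0}))"
proof -
  define A where "A = cball (0::complex) 1 - ball 0 (norm q)"
  have "A \<subseteq> - {0}"
    using q_nonzero by (auto simp: A_def)
  then have "bounded (ratio ` A)"
    unfolding A_def
    by (intro compact_imp_bounded compact_continuous_image compact_diff
          holomorphic_on_imp_continuous_on holomorphic_on_subset[OF holomorphic_ratio]) auto
  moreover have "ratio ` (- {0}) \<subseteq> ratio ` A"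
  proof
    fix y assume "y \<in> ratio ` (- {0})"
    then obtain z where z: "z \<noteq> 0" "y = ratio z" by auto
    obtain k where "norm q \<le> norm (q powi k * z)" "norm (q powi k * z) \<le> 1"
      using exists_powi_in_annulus[of q z] norm_q q_nonzero z by auto
    then have "q powi k * z \<in> A" by (simp add: A_def)
    then show "y \<in> ratio ` A"
      using ratio_powi_mult[of z k] z by (metis image_eqI)
  qed
  ultimately show ?thesis by (rule bounded_subset)
qed

lemma ratio_eq_0:
  assumes "X \<noteq> 0"
  shows "ratio X = 0"
proof -
  have "(ratio \<circ> exp) holomorphic_on UNIV"
    by (intro holomorphic_on_compose holomorphic_intros holomorphic_on_subset[OF holomorphic_ratio]) auto
  moreover have "bounded (range (ratio \<circ> exp))"
    by (rule bounded_subset[OF bounded_ratio]) auto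
  ultimately have "(ratio \<circ> exp) constant_on UNIV"
    by (rule Liouville_theorem)
  then have "ratio (exp (Ln X)) = ratio (exp (Ln U))"
    unfolding constant_on_def by (metis UNIV_I comp_apply)
  also have "ratio (exp (Ln U)) = 0"
    using U_nonzero D_U_nonzero I_U by (simp add: ratio_def)
  finally show ?thesis using assms by simp
qed

lemma I_eq_0: "X \<noteq> 0 \<Longrightarrow> I X = 0"
  using D_eq_0_imp_I_eq_0[of X] ratio_eq_0[of X] by (auto simp: ratio_def split: if_splits)

end

lemma islimpt_diff_countable:
  fixes S B :: "complex set"
  assumes "open S" "Y \<in> S" "countable B"
  shows "Y islimpt (S - B)"
proof (rule islimpt_approachable[THEN iffD2], intro allI impI)
  fix e :: real assume "e > 0"
  obtain d where d: "d > 0" "ball Y d \<subseteq> S"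
    using assms(1,2) open_contains_ball by blast
  have "uncountable (ball Y (min e d))"
    using \<open>e > 0\<close> d by (intro uncountable_ball) simp
  then have "\<not> ball Y (min e d) \<subseteq> insert Y B"
    using assms(3) by (metis countable_insert countable_subset)
  then obtain y where y: "y \<in> ball Y (min e d)" "y \<notin> B" "y \<noteq> Y" by blast
  then have "y \<in> S" "dist y Y < e"
    using d by (auto simp: dist_commute)
  then show "\<exists>y\<in>S - B. y \<noteq> Y \<and> dist y Y < e"
    using y by blast
qed

lemma countable_nongeneric:
  fixes q U :: complex
  assumes "q \<noteq> 0" "U \<noteq> 0"
  shows "countable {Y. \<exists>k. Y * Y = q powi k \<or> U * Y = q powi k \<or> U / Y = q powi k}"
proof (rule countable_subset)
  show "{Y. \<exists>k. Y * Y = q powi k \<or> U * Y = q powi k \<or> U / Y = q powi k}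
      \<subseteq> (\<Union>k. {csqrt (q powi k), - csqrt (q powi k), q powi k / U, U / q powi k})"
  proof safe
    fix Y k assume "Y * Y = q powi k"
    then have "Y^2 = csqrt (q powi k) ^ 2"
      using power2_csqrt[of "q powi k"] by (simp add: power2_eq_square)
    then have "Y = csqrt (q powi k) \<or> Y = - csqrt (q powi k)"
      by (simp only: power2_eq_iff)
    then show "Y \<in> (\<Union>k. {csqrt (q powi k), - csqrt (q powi k), q powi k / U, U / q powi k})"
      by blast
  next
    fix Y k assume "U * Y = q powi k"
    then show "Y \<in> (\<Union>k. {csqrt (q powi k), - csqrt (q powi k), q powi k / U, U / q powi k})"
      using assms by (auto simp: field_simps)
  next
    fix Y k assume "U / Y = q powi k"
    then have "Y = U / q powi k"
      using assms by (cases "Y = 0") (auto simp: field_simps)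
    then show "Y \<in> (\<Union>k. {csqrt (q powi k), - csqrt (q powi k), q powi k / U, U / q powi k})"
      by blast
  qed
qed auto

theorem theta_three_term_eq_0:
  assumes "norm q < 1" "q \<noteq> 0" "X \<noteq> 0" "Y \<noteq> 0" "U \<noteq> 0" "V \<noteq> 0"
  shows "theta_three_term q X Y U V = 0"
proof -
  interpret theta_nome q using assms by unfold_locales
  define B where "B = {Y. \<exists>k. Y * Y = q powi k \<or> U * Y = q powi k \<or> U / Y = q powi k}"
  define F where "F y = theta_three_term q X y U V" for y
  have holo: "F holomorphic_on - {0}"
    unfolding F_def theta_three_term_def using assms by (intro holomorphic_intros) auto
  have zero: "F y = 0" if "y \<in> - {0} - B" for y
  proof -
    interpret theta_quotient_generic q y U V
      using that assms by unfold_locales (auto simp: B_def)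
    show ?thesis using I_eq_0[OF \<open>X \<noteq> 0\<close>] by (simp add: F_def I_def)
  qed
  have limpt: "Y islimpt (- {0} - B)"
    using assms countable_nongeneric[of q U] by (intro islimpt_diff_countable) (auto simp: B_def)
  have "F Y = 0"
    by (rule analytic_continuation[OF holo _ connected_punctured_universe _ _ limpt zero])
       (use assms in auto)
  then show ?thesis by (simp add: F_def)
qed

section \<open>The bracket \<open>[u]\<close>\<close>

locale bracket =
  fixes x :: real and r :: nat
  assumes x_pos: "0 < x" and x_less_1: "x < 1" and r_pos: "0 < r"
begin

definition nome :: complex where
  "nome = of_real (x ^ (2 * r))"

definition xpow :: "complex \<Rightarrow> complex" where
  "xpow u = exp (2 * u * of_real (ln x))"

sublocale theta_nome nome
proof
  have "x ^ (2 * r) < 1"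
    using x_pos x_less_1 r_pos by (simp add: power_less_one_iff)
  then show "norm nome < 1"
    unfolding nome_def norm_of_real using x_pos by simp
  show "nome \<noteq> 0"
    using x_pos by (simp add: nome_def)
qed

lemma xpow_add: "xpow (s + t) = xpow s * xpow t"
  by (simp add: xpow_def exp_add[symmetric] algebra_simps)

lemma xpow_diff: "xpow (s - t) = xpow s / xpow t"
  by (simp add: xpow_def exp_diff[symmetric] algebra_simps)

lemma xpow_nonzero: "xpow u \<noteq> 0"
  by (simp add: xpow_def)

lemma brk_eq_theta: "brk x r u = exp ((u^2 / of_nat r - u) * of_real (ln x)) * theta nome (xpow u)"
  by (simp add: brk_def nome_def xpow_def)

lemma brk_minus: "brk x r (- u) = - brk x r u"
proof -
  have "exp (((- u)^2 / of_nat r - (- u)) * of_real (ln x))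
          = exp ((u^2 / of_nat r - u) * of_real (ln x)) * xpow u"
    by (simp add: xpow_def exp_add[symmetric] algebra_simps)
  then have "brk x r (- u)
      = exp ((u^2 / of_nat r - u) * of_real (ln x)) * (xpow u * theta nome (xpow (- u)))"
    by (simp add: brk_eq_theta mult.assoc)
  also have "xpow u * theta nome (xpow (- u)) = - theta nome (xpow u)"
    using theta_inverse[OF xpow_nonzero, of u] xpow_nonzero[of u]
    by (simp add: xpow_def exp_minus field_simps)
  finally show ?thesis by (simp add: brk_eq_theta)
qed

lemma brk_pair:
  "brk x r (s + t) * brk x r (s - t)
     = exp (of_real (ln x) * (2 * (s^2 + t^2) / of_nat r - 2 * s))
       * (theta nome (xpow s * xpow t) * theta nome (xpow s / xpow t))"
proof -
  have "((s + t)^2 / of_nat r - (s + t)) * of_real (ln x) + ((s - t)^2 / of_nat r - (s - t)) * of_real (ln x)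
      = of_real (ln x) * (2 * (s^2 + t^2) / of_nat r - 2 * s)"
    using r_pos by (simp add: field_simps power2_eq_square)
  then have "exp (((s + t)^2 / of_nat r - (s + t)) * of_real (ln x))
             * exp (((s - t)^2 / of_nat r - (s - t)) * of_real (ln x))
           = exp (of_real (ln x) * (2 * (s^2 + t^2) / of_nat r - 2 * s))"
    by (simp only: exp_add[symmetric])
  then show ?thesis
    unfolding brk_eq_theta xpow_add xpow_diff by (simp add: mult_ac)
qed

theorem brk_three_term:
  "brk x r (a + b) * brk x r (a - b) * (brk x r (c + d) * brk x r (c - d))
   - brk x r (a + c) * brk x r (a - c) * (brk x r (b + d) * brk x r (b - d))
   + brk x r (a + d) * brk x r (a - d) * (brk x r (b + c) * brk x r (b - c)) = 0"
proof -
  define E :: "complex \<Rightarrow> complex \<Rightarrow> complex"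
    where "E s t = exp (of_real (ln x) * (2 * (s^2 + t^2) / of_nat r - 2 * s))" for s t
  define M where "M = exp (of_real (ln x) * (2 * (a^2 + b^2 + c^2 + d^2) / of_nat r - 2 * a - 2 * b - 2 * c))"
  have E_eqs: "E a b * E c d = M * xpow b" "E a c * E b d = M * xpow c" "E a d * E b c = M * xpow c"
    unfolding E_def M_def xpow_def exp_add[symmetric]
    by (rule arg_cong[where f = exp]; use r_pos in \<open>simp add: field_simps power2_eq_square\<close>)+
  have pairs: "brk x r (s + t) * brk x r (s - t) * (brk x r (s' + t') * brk x r (s' - t'))
      = E s t * E s' t' * (theta nome (xpow s * xpow t) * theta nome (xpow s / xpow t)
          * (theta nome (xpow s' * xpow t') * theta nome (xpow s' / xpow t')))" for s t s' t'
    unfolding brk_pair E_def by (simp add: mult_ac)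
  have "brk x r (a + b) * brk x r (a - b) * (brk x r (c + d) * brk x r (c - d))
   - brk x r (a + c) * brk x r (a - c) * (brk x r (b + d) * brk x r (b - d))
   + brk x r (a + d) * brk x r (a - d) * (brk x r (b + c) * brk x r (b - c))
   = M * theta_three_term nome (xpow a) (xpow b) (xpow c) (xpow d)"
    unfolding pairs E_eqs theta_three_term_def by (simp add: algebra_simps)
  also have "\<dots> = 0"
    using theta_three_term_eq_0[OF norm_q q_nonzero] xpow_nonzero by simp
  finally show ?thesis .
qed

end

section \<open>Chains and the star product\<close>

definition chain_k :: "complex list \<Rightarrow> nat \<Rightarrow> complex" where
  "chain_k ks j = (if j = 0 then -1 else if j \<le> length ks then ks ! (j - 1) else 0)"

lemma fst_fchain: "fst (fchain x r \<delta> i ks) = (\<lambda>j. if i \<le> j \<and> j \<le> i + length ks then 1 else 0)"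
  by (simp add: fchain_def Let_def)

definition chain_link ::
    "real \<Rightarrow> nat \<Rightarrow> complex \<Rightarrow> complex list \<Rightarrow> (nat \<Rightarrow> nat \<Rightarrow> complex) \<Rightarrow> nat \<Rightarrow> nat \<Rightarrow> complex" where
  "chain_link x r \<delta> ks u i j = brk x r (u (i + j - 1) 1 - u (i + j) 1 - (chain_k ks j + 1/2) * \<delta>)
                                 / brk x r (u (i + j - 1) 1 - u (i + j) 1)"

definition chain_node ::
    "real \<Rightarrow> nat \<Rightarrow> complex \<Rightarrow> complex list \<Rightarrow> (nat \<Rightarrow> nat \<Rightarrow> complex) \<Rightarrow> (nat \<Rightarrow> complex) \<Rightarrow> nat \<Rightarrow> nat
      \<Rightarrow> complex" where
  "chain_node x r \<delta> ks u \<kappa> i j = brk x r (u (i + j) 1 - (chain_k ks j - chain_k ks (j + 1) + 1/2) * \<delta> - \<kappa> (i + j))"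

lemma snd_fchain:
  "snd (fchain x r \<delta> i ks) u \<kappa>
     = (\<Prod>j\<in>{1..length ks}. chain_link x r \<delta> ks u i j) * (\<Prod>j\<in>{0..length ks}. chain_node x r \<delta> ks u \<kappa> i j)"
  by (simp add: fchain_def Let_def chain_k_def chain_link_def chain_node_def)

lemma snd_fchain_Nil: "snd (fchain x r \<delta> i []) u \<kappa> = brk x r (u i 1 + \<delta> / 2 - \<kappa> i)"
  by (simp add: snd_fchain chain_node_def chain_k_def algebra_simps)

lemma snd_fchain_cong:
  assumes "\<And>t. t \<le> length ks \<Longrightarrow> u (i + t) 1 = u' (i + t) 1"
      and "\<And>t. t \<le> length ks \<Longrightarrow> \<kappa> (i + t) = \<kappa>' (i + t)"
  shows "snd (fchain x r \<delta> i ks) u \<kappa> = snd (fchain x r \<delta> i ks) u' \<kappa>'"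
proof -
  have "u (i + j - 1) 1 = u' (i + j - 1) 1" "u (i + j) 1 = u' (i + j) 1" if "j \<in> {1..length ks}" for j
    using assms(1)[of "j - 1"] assms(1)[of j] that by auto
  then show ?thesis
    unfolding snd_fchain chain_link_def chain_node_def
    by (intro arg_cong2[where f = "(*)"] prod.cong refl) (use assms in auto)
qed

lemma chain_k_append_le: "j \<le> length ks1 \<Longrightarrow> chain_k (ks1 @ k # ks2) j = chain_k ks1 j"
  by (auto simp: chain_k_def nth_append)

lemma chain_k_append_middle: "chain_k (ks1 @ k # ks2) (length ks1 + 1) = k"
  by (auto simp: chain_k_def nth_append)

lemma chain_k_append_gt: "1 \<le> t \<Longrightarrow> chain_k (ks1 @ k # ks2) (length ks1 + 1 + t) = chain_k ks2 t"
  by (auto simp: chain_k_def nth_append)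

lemma prod_atLeastAtMost_split_shift:
  fixes g :: "nat \<Rightarrow> 'a :: comm_monoid_mult"
  assumes "a \<le> A + 1"
  shows "(\<Prod>j\<in>{a..A + 1 + m}. g j) = (\<Prod>j\<in>{a..A}. g j) * (\<Prod>t\<in>{0..m}. g (A + 1 + t))"
proof -
  have "(\<Prod>j\<in>{a..A + 1 + m}. g j) = (\<Prod>j\<in>{a..A}. g j) * (\<Prod>j\<in>{A + 1..A + 1 + m}. g j)"
    using prod.ub_add_nat[of a A g "1 + m"] assms by (simp add: add.assoc)
  also have "(\<Prod>j\<in>{A + 1..A + 1 + m}. g j) = (\<Prod>t\<in>{0..m}. g (A + 1 + t))"
    using prod.shift_bounds_cl_nat_ivl[of g 0 "A + 1" m] by (simp add: add_ac)
  finally show ?thesis .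
qed

lemma prod_chain_link_append:
  fixes ks1 ks2 :: "complex list"
  defines "A \<equiv> length ks1"
  shows "(\<Prod>j\<in>{1..length (ks1 @ k # ks2)}. chain_link x r \<delta> (ks1 @ k # ks2) u i j)
     = (\<Prod>j\<in>{1..A}. chain_link x r \<delta> ks1 u i j)
     * (brk x r (u (i + A) 1 - u (i + A + 1) 1 - (k + 1/2) * \<delta>) / brk x r (u (i + A) 1 - u (i + A + 1) 1))
     * (\<Prod>t\<in>{1..length ks2}. chain_link x r \<delta> ks2 u (i + A + 1) t)"
proof -
  let ?ks = "ks1 @ k # ks2" and ?link = "chain_link x r \<delta> (ks1 @ k # ks2) u i"
  have "(\<Prod>j\<in>{1..A + 1 + length ks2}. ?link j)
      = (\<Prod>j\<in>{1..A}. ?link j) * (\<Prod>t\<in>{0..length ks2}. ?link (A + 1 + t))"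
    by (rule prod_atLeastAtMost_split_shift) simp
  also have "(\<Prod>j\<in>{1..A}. ?link j) = (\<Prod>j\<in>{1..A}. chain_link x r \<delta> ks1 u i j)"
    by (rule prod.cong) (auto simp: chain_link_def A_def chain_k_append_le)
  also have "(\<Prod>t\<in>{0..length ks2}. ?link (A + 1 + t))
      = ?link (A + 1) * (\<Prod>t\<in>{1..length ks2}. chain_link x r \<delta> ks2 u (i + A + 1) t)"
  proof -
    have "(\<Prod>t\<in>{1..length ks2}. ?link (A + 1 + t))
        = (\<Prod>t\<in>{1..length ks2}. chain_link x r \<delta> ks2 u (i + A + 1) t)"
    proof (rule prod.cong[OF refl])
      fix t assume "t \<in> {1..length ks2}"
      then show "?link (A + 1 + t) = chain_link x r \<delta> ks2 u (i + A + 1) t"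
        using chain_k_append_gt[of t ks1 k ks2] by (simp add: chain_link_def A_def add_ac)
    qed
    then show ?thesis
      unfolding prod.atLeast_Suc_atMost[OF le0] by simp
  qed
  also have "?link (A + 1)
      = brk x r (u (i + A) 1 - u (i + A + 1) 1 - (k + 1/2) * \<delta>) / brk x r (u (i + A) 1 - u (i + A + 1) 1)"
    using chain_k_append_middle[of ks1 k ks2] by (simp add: chain_link_def A_def)
  finally show ?thesis
    by (simp add: A_def mult.assoc)
qed

lemma prod_chain_node_append:
  fixes ks1 ks2 :: "complex list"
  defines "A \<equiv> length ks1"
  shows "(\<Prod>j\<in>{0..length (ks1 @ k # ks2)}. chain_node x r \<delta> (ks1 @ k # ks2) u \<kappa> i j)
     = (\<Prod>j\<in>{0..A}. chain_node x r \<delta> ks1 u (\<kappa>(i + A := \<kappa> (i + A) - k * \<delta>)) i j)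
     * (\<Prod>t\<in>{0..length ks2}. chain_node x r \<delta> ks2 u (\<kappa>(i + A + 1 := \<kappa> (i + A + 1) + (k + 1) * \<delta>)) (i + A + 1) t)"
proof -
  let ?node = "chain_node x r \<delta> (ks1 @ k # ks2) u \<kappa> i"
  have "(\<Prod>j\<in>{0..A + 1 + length ks2}. ?node j)
      = (\<Prod>j\<in>{0..A}. ?node j) * (\<Prod>t\<in>{0..length ks2}. ?node (A + 1 + t))"
    by (rule prod_atLeastAtMost_split_shift) simp
  moreover have "?node j = chain_node x r \<delta> ks1 u (\<kappa>(i + A := \<kappa> (i + A) - k * \<delta>)) i j" if "j \<in> {0..A}" for j
  proof -
    from that consider "j = A" | "j < A" by fastforce
    then show ?thesis
    proof cases
      case 1
      then show ?thesis
        using chain_k_append_middle[of ks1 k ks2] chain_k_append_le[of A ks1 k ks2]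
        by (simp add: chain_node_def A_def chain_k_def algebra_simps)
    next
      case 2
      then show ?thesis
        using chain_k_append_le[of j ks1 k ks2] chain_k_append_le[of "j + 1" ks1 k ks2]
        by (simp add: chain_node_def A_def)
    qed
  qed
  moreover have "?node (A + 1 + t)
      = chain_node x r \<delta> ks2 u (\<kappa>(i + A + 1 := \<kappa> (i + A + 1) + (k + 1) * \<delta>)) (i + A + 1) t" for t
  proof -
    have "chain_k (ks1 @ k # ks2) (A + 1 + t + 1) = chain_k ks2 (t + 1)"
      using chain_k_append_gt[of "t + 1" ks1 k ks2] by (simp add: A_def add_ac)
    moreover have "chain_k (ks1 @ k # ks2) (A + 1 + t) = (if t = 0 then k else chain_k ks2 t)"
      using chain_k_append_middle[of ks1 k ks2] chain_k_append_gt[of t ks1 k ks2] by (simp add: A_def)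
    ultimately show ?thesis
      by (simp add: chain_node_def chain_k_def algebra_simps)
  qed
  ultimately show ?thesis
    by (simp add: A_def)
qed

lemma snd_fchain_append:
  fixes ks1 ks2 :: "complex list"
  defines "A \<equiv> length ks1"
  shows "snd (fchain x r \<delta> i (ks1 @ k # ks2)) u \<kappa> =
     snd (fchain x r \<delta> i ks1) u (\<kappa>(i + A := \<kappa> (i + A) - k * \<delta>))
   * (brk x r (u (i + A) 1 - u (i + A + 1) 1 - (k + 1/2) * \<delta>) / brk x r (u (i + A) 1 - u (i + A + 1) 1))
   * snd (fchain x r \<delta> (i + A + 1) ks2) u (\<kappa>(i + A + 1 := \<kappa> (i + A + 1) + (k + 1) * \<delta>))"
  unfolding snd_fchain prod_chain_link_append prod_chain_node_append A_def by (simp add: mult_ac)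

definition kappa_shift :: "nat \<Rightarrow> (nat \<Rightarrow> nat) \<Rightarrow> complex \<Rightarrow> (nat \<Rightarrow> complex) \<Rightarrow> nat \<Rightarrow> complex" where
  "kappa_shift n b \<delta> \<kappa> = (let b' = (\<lambda>j. if 1 \<le> j \<and> j \<le> n - 1 then b j else 0)
     in (\<lambda>j. \<kappa> j + (of_nat (b' (j - 1)) - 2 * of_nat (b' j) + of_nat (b' (j + 1))) * \<delta>))"

lemma prod_prod_prod_le1:
  fixes a b :: "'a \<Rightarrow> nat"
  assumes "finite S" "\<And>j. j \<in> S \<Longrightarrow> a j \<le> 1 \<and> b j \<le> 1"
  shows "(\<Prod>j\<in>S. \<Prod>s\<in>{1..a j}. \<Prod>t\<in>{1..b j}. h j s t) = (\<Prod>j\<in>{j\<in>S. a j = 1 \<and> b j = 1}. h j 1 1)"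
proof -
  have "(\<Prod>j\<in>S. \<Prod>s\<in>{1..a j}. \<Prod>t\<in>{1..b j}. h j s t) = (\<Prod>j\<in>S. if a j = 1 \<and> b j = 1 then h j 1 1 else 1)"
  proof (rule prod.cong[OF refl])
    fix j assume "j \<in> S"
    then have "a j = 0 \<or> a j = 1" "b j = 0 \<or> b j = 1" using assms(2) by fastforce+
    then show "(\<Prod>s\<in>{1..a j}. \<Prod>t\<in>{1..b j}. h j s t) = (if a j = 1 \<and> b j = 1 then h j 1 1 else 1)"
      by auto
  qed
  also have "\<dots> = (\<Prod>j\<in>{j\<in>S. a j = 1 \<and> b j = 1}. h j 1 1)"
    by (rule prod.inter_filter[symmetric]) (use assms in auto)
  finally show ?thesis .
qed

lemma fst_star: "fst (star n x r \<delta> F G) = (\<lambda>j. fst F j + fst G j)"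
  by (simp add: star_def Let_def)

lemma perms_tuple_le1:
  assumes "\<forall>j\<in>{1..n-1}. c j \<le> 1"
  shows "perms_tuple n c = {\<lambda>j\<in>{1..n-1}. id}"
proof -
  have "perms_tuple n c = PiE {1..n-1} (\<lambda>j. {(\<lambda>j\<in>{1..n-1}. id) j})"
    unfolding perms_tuple_def
  proof (rule PiE_cong)
    fix j assume j: "j \<in> {1..n-1}"
    then have "c j = 0 \<or> c j = 1" using assms by fastforce
    then show "{p. p permutes {1..c j}} = {(\<lambda>j\<in>{1..n-1}. id) j}"
      using j by auto
  qed
  also have "\<dots> = {\<lambda>j\<in>{1..n-1}. id}"
    by (rule PiE_singleton[OF restrict_extensional])
  finally show ?thesis .
qed

lemma snd_star_le1:
  assumes "\<forall>j\<in>{1..n-1}. fst F j + fst G j \<le> 1"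
  shows "snd (star n x r \<delta> F G) w \<kappa> = star_integrand n x r \<delta> F G w \<kappa>"
proof -
  have perms: "perms_tuple n (\<lambda>j. fst F j + fst G j) = {\<lambda>j\<in>{1..n-1}. id}"
    by (rule perms_tuple_le1) (use assms in auto)
  have "(\<lambda>j t. if 1 \<le> j \<and> j \<le> n - 1 then w j ((\<lambda>j\<in>{1..n-1}. id) j t) else w j t) = w"
    by (auto simp: fun_eq_iff)
  then show ?thesis
    unfolding star_def Let_def perms by simp
qed

definition swap_12 :: "nat \<Rightarrow> (nat \<Rightarrow> nat \<Rightarrow> complex) \<Rightarrow> nat \<Rightarrow> nat \<Rightarrow> complex" where
  "swap_12 e w = (\<lambda>j t. if j = e then w j (Transposition.transpose 1 2 t) else w j t)"

lemma swap_12_other [simp]: "j \<noteq> e \<Longrightarrow> swap_12 e w j t = w j t"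
  by (simp add: swap_12_def)

lemma perms_tuple_single_two:
  assumes e: "e \<in> {1..n-1}" and "c e = 2" and rest: "\<forall>j\<in>{1..n-1}-{e}. c j \<le> 1"
  shows "perms_tuple n c = {\<lambda>j\<in>{1..n-1}. id, \<lambda>j\<in>{1..n-1}. if j = e then Transposition.transpose 1 2 else id}"
proof -
  have one: "{p. p permutes {1..c j}} = {id}" if "j \<in> {1..n-1}" "j \<noteq> e" for j
  proof -
    have "c j \<le> 1" using rest that by blast
    then have "c j = 0 \<or> c j = 1" by arith
    then show ?thesis by auto
  qed
  have "{1..c e} = {1, 2}"
    using \<open>c e = 2\<close> by auto
  then have two: "{p. p permutes {1..c e}} = {id, Transposition.transpose 1 2}"
    by (auto simp: permutes_doubleton_iff)
  show ?thesis
  proof (intro equalityI subsetI)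
    fix \<sigma> :: "nat \<Rightarrow> nat \<Rightarrow> nat" assume "\<sigma> \<in> perms_tuple n c"
    then have \<sigma>: "\<And>j. j \<in> {1..n-1} \<Longrightarrow> \<sigma> j permutes {1..c j}" "\<sigma> \<in> extensional {1..n-1}"
      by (auto simp: perms_tuple_def PiE_iff)
    have "\<sigma> j = id" if "j \<in> {1..n-1}" "j \<noteq> e" for j
      using \<sigma>(1)[OF that(1)] one[OF that] by auto
    moreover have "\<sigma> e = id \<or> \<sigma> e = Transposition.transpose 1 2"
      using \<sigma>(1)[OF e] two by auto
    ultimately show "\<sigma> \<in> {\<lambda>j\<in>{1..n-1}. id, \<lambda>j\<in>{1..n-1}. if j = e then Transposition.transpose 1 2 else id}"
      using \<sigma>(2) e by (auto simp: fun_eq_iff extensional_def)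
  next
    fix \<sigma> :: "nat \<Rightarrow> nat \<Rightarrow> nat" assume "\<sigma> \<in> {\<lambda>j\<in>{1..n-1}. id, \<lambda>j\<in>{1..n-1}. if j = e then Transposition.transpose 1 2 else id}"
    then show "\<sigma> \<in> perms_tuple n c"
      unfolding perms_tuple_def using one two e by (auto simp: PiE_iff)
  qed
qed

lemma snd_star_single_two:
  assumes e: "e \<in> {1..n-1}" and "fst F e + fst G e = 2"
    and "\<forall>j\<in>{1..n-1}-{e}. fst F j + fst G j \<le> 1"
  shows "snd (star n x r \<delta> F G) w \<kappa>
       = (star_integrand n x r \<delta> F G w \<kappa> + star_integrand n x r \<delta> F G (swap_12 e w) \<kappa>) / 2"
proof -
  let ?id = "\<lambda>j\<in>{1..n-1}. id :: nat \<Rightarrow> nat"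
  let ?swap = "\<lambda>j\<in>{1..n-1}. if j = e then Transposition.transpose 1 2 else (id :: nat \<Rightarrow> nat)"
  have perms: "perms_tuple n (\<lambda>j. fst F j + fst G j) = {?id, ?swap}"
    by (rule perms_tuple_single_two[OF e]) (use assms in auto)
  have "?id e 1 \<noteq> ?swap e 1"
    using e by (simp add: Transposition.transpose_def)
  then have distinct: "?id \<noteq> ?swap" by metis
  have w_id: "(\<lambda>j t. if 1 \<le> j \<and> j \<le> n - 1 then w j (?id j t) else w j t) = w"
    by (auto simp: fun_eq_iff)
  have w_swap: "(\<lambda>j t. if 1 \<le> j \<and> j \<le> n - 1 then w j (?swap j t) else w j t) = swap_12 e w"
    using e by (auto simp: fun_eq_iff swap_12_def)
  have sum: "(\<Sum>\<sigma>\<in>{?id, ?swap}. h \<sigma>) = h ?id + h ?swap" for h :: "(nat \<Rightarrow> nat \<Rightarrow> nat) \<Rightarrow> complex"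
    using distinct by simp
  have card: "card {?id, ?swap} = 2"
    using distinct by simp
  show ?thesis
    unfolding star_def Let_def perms snd_conv sum card w_id w_swap by simp
qed

lemma star_integrand_le1:
  assumes "\<And>j. fst F j \<le> 1" "\<And>j. fst G j \<le> 1"
  shows "star_integrand n x r \<delta> F G w \<kappa> =
     snd F w (kappa_shift n (fst G) \<delta> \<kappa>) * snd G (\<lambda>j t. w j (fst F j + t)) \<kappa>
   * (\<Prod>j\<in>{j\<in>{1..n-1}. fst F j = 1 \<and> fst G j = 1}.
        brk x r (w j 1 - w j (fst F j + 1) - \<delta>) / brk x r (w j 1 - w j (fst F j + 1)))
   * (\<Prod>j\<in>{j\<in>{1..n-2}. fst F j = 1 \<and> fst G (j+1) = 1}.
        brk x r (w j 1 - w (j+1) (fst F (j+1) + 1) + \<delta>/2) / brk x r (w j 1 - w (j+1) (fst F (j+1) + 1)))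
   * (\<Prod>j\<in>{j\<in>{2..n-1}. fst F j = 1 \<and> fst G (j-1) = 1}.
        brk x r (w j 1 - w (j-1) (fst F (j-1) + 1) + \<delta>/2) / brk x r (w j 1 - w (j-1) (fst F (j-1) + 1)))"
  unfolding star_integrand_def Let_def kappa_shift_def
  by (subst (1 2 3) prod_prod_prod_le1) (use assms in auto)

lemma fst_fchain_le1: "fst (fchain x r \<delta> i ks) j \<le> 1"
  by (simp add: fst_fchain)

lemma snd_star_fchain_separated:
  fixes ks ks' :: "complex list"
  assumes "i + length ks + 1 < j \<or> j + length ks' + 1 < i"
  shows "snd (star n x r \<delta> (fchain x r \<delta> i ks) (fchain x r \<delta> j ks')) w \<kappa>
       = snd (fchain x r \<delta> i ks) w \<kappa> * snd (fchain x r \<delta> j ks') w \<kappa>"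
proof -
  let ?F = "fchain x r \<delta> i ks" and ?G = "fchain x r \<delta> j ks'"
  have "snd (star n x r \<delta> ?F ?G) w \<kappa> = star_integrand n x r \<delta> ?F ?G w \<kappa>"
    by (rule snd_star_le1) (use assms in \<open>auto simp: fst_fchain\<close>)
  also have "\<dots> = snd ?F w (kappa_shift n (fst ?G) \<delta> \<kappa>) * snd ?G (\<lambda>j t. w j (fst ?F j + t)) \<kappa>"
  proof -
    have no_cross: "{j\<in>{1..n-1}. fst ?F j = 1 \<and> fst ?G j = 1} = {}"
        "{j\<in>{1..n-2}. fst ?F j = 1 \<and> fst ?G (j+1) = 1} = {}"
        "{j\<in>{2..n-1}. fst ?F j = 1 \<and> fst ?G (j-1) = 1} = {}"
      using assms by (auto simp: fst_fchain)
    show ?thesis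
      unfolding star_integrand_le1[OF fst_fchain_le1 fst_fchain_le1] no_cross by simp
  qed
  also have "snd ?F w (kappa_shift n (fst ?G) \<delta> \<kappa>) = snd ?F w \<kappa>"
    by (rule snd_fchain_cong) (use assms in \<open>auto simp: kappa_shift_def fst_fchain\<close>)
  also have "snd ?G (\<lambda>j t. w j (fst ?F j + t)) \<kappa> = snd ?G w \<kappa>"
    by (rule snd_fchain_cong) (use assms in \<open>auto simp: fst_fchain\<close>)
  finally show ?thesis .
qed

lemma teq_star_fchain_separated:
  fixes ks ks' :: "complex list"
  assumes "i + length ks + 1 < j"
  shows "teq n x r (star n x r \<delta> (fchain x r \<delta> i ks) (fchain x r \<delta> j ks'))
                   (star n x r \<delta> (fchain x r \<delta> j ks') (fchain x r \<delta> i ks))"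
  using assms by (simp add: teq_def fst_star add.commute snd_star_fchain_separated)

lemma snd_star_fchain_adjacent:
  fixes ks1 ks2 :: "complex list"
  defines "A \<equiv> length ks1"
  assumes "1 \<le> i" "i + A + 1 + length ks2 \<le> n - 1"
  shows "snd (star n x r \<delta> (fchain x r \<delta> i ks1) (fchain x r \<delta> (i + A + 1) ks2)) w \<kappa>
       = snd (fchain x r \<delta> i ks1) w (\<kappa>(i + A := \<kappa> (i + A) + \<delta>))
         * (brk x r (w (i + A) 1 - w (i + A + 1) 1 + \<delta> / 2) / brk x r (w (i + A) 1 - w (i + A + 1) 1))
         * snd (fchain x r \<delta> (i + A + 1) ks2) w \<kappa>"
proof -
  let ?F = "fchain x r \<delta> i ks1" and ?G = "fchain x r \<delta> (i + A + 1) ks2"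
  have "snd (star n x r \<delta> ?F ?G) w \<kappa> = star_integrand n x r \<delta> ?F ?G w \<kappa>"
    by (rule snd_star_le1) (auto simp: fst_fchain A_def)
  also have "\<dots> = snd ?F w (kappa_shift n (fst ?G) \<delta> \<kappa>) * snd ?G (\<lambda>j t. w j (fst ?F j + t)) \<kappa>
      * (brk x r (w (i + A) 1 - w (i + A + 1) 1 + \<delta> / 2) / brk x r (w (i + A) 1 - w (i + A + 1) 1))"
  proof -
    have cross: "{j\<in>{1..n-1}. fst ?F j = 1 \<and> fst ?G j = 1} = {}"
        "{j\<in>{1..n-2}. fst ?F j = 1 \<and> fst ?G (j+1) = 1} = {i + A}"
        "{j\<in>{2..n-1}. fst ?F j = 1 \<and> fst ?G (j-1) = 1} = {}"
      using assms by (auto simp: fst_fchain A_def)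
    have "fst ?F (i + A + 1) = 0"
      by (simp add: fst_fchain A_def)
    then show ?thesis
      unfolding star_integrand_le1[OF fst_fchain_le1 fst_fchain_le1] cross by (simp add: add.assoc)
  qed
  also have "snd ?F w (kappa_shift n (fst ?G) \<delta> \<kappa>) = snd ?F w (\<kappa>(i + A := \<kappa> (i + A) + \<delta>))"
    by (rule snd_fchain_cong) (use assms in \<open>auto simp: kappa_shift_def fst_fchain A_def\<close>)
  also have "snd ?G (\<lambda>j t. w j (fst ?F j + t)) \<kappa> = snd ?G w \<kappa>"
    by (rule snd_fchain_cong) (auto simp: fst_fchain A_def)
  finally show ?thesis by (simp only: ac_simps)
qed

lemma snd_star_fchain_adjacent_rev:
  fixes ks1 ks2 :: "complex list"
  defines "A \<equiv> length ks1"
  assumes "1 \<le> i" "i + A + 1 + length ks2 \<le> n - 1"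
  shows "snd (star n x r \<delta> (fchain x r \<delta> (i + A + 1) ks2) (fchain x r \<delta> i ks1)) w \<kappa>
       = snd (fchain x r \<delta> i ks1) w \<kappa>
         * (brk x r (w (i + A + 1) 1 - w (i + A) 1 + \<delta> / 2) / brk x r (w (i + A + 1) 1 - w (i + A) 1))
         * snd (fchain x r \<delta> (i + A + 1) ks2) w (\<kappa>(i + A + 1 := \<kappa> (i + A + 1) + \<delta>))"
proof -
  let ?F = "fchain x r \<delta> i ks1" and ?G = "fchain x r \<delta> (i + A + 1) ks2"
  have "snd (star n x r \<delta> ?G ?F) w \<kappa> = star_integrand n x r \<delta> ?G ?F w \<kappa>"
    by (rule snd_star_le1) (auto simp: fst_fchain A_def)
  also have "\<dots> = snd ?G w (kappa_shift n (fst ?F) \<delta> \<kappa>) * snd ?F (\<lambda>j t. w j (fst ?G j + t)) \<kappa>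
      * (brk x r (w (i + A + 1) 1 - w (i + A) 1 + \<delta> / 2) / brk x r (w (i + A + 1) 1 - w (i + A) 1))"
  proof -
    have cross: "{j\<in>{1..n-1}. fst ?G j = 1 \<and> fst ?F j = 1} = {}"
        "{j\<in>{1..n-2}. fst ?G j = 1 \<and> fst ?F (j+1) = 1} = {}"
        "{j\<in>{2..n-1}. fst ?G j = 1 \<and> fst ?F (j-1) = 1} = {i + A + 1}"
      using assms by (auto simp: fst_fchain A_def)
    have "fst ?G (i + A) = 0"
      by (simp add: fst_fchain A_def)
    then show ?thesis
      unfolding star_integrand_le1[OF fst_fchain_le1 fst_fchain_le1] cross by simp
  qed
  also have "snd ?G w (kappa_shift n (fst ?F) \<delta> \<kappa>) = snd ?G w (\<kappa>(i + A + 1 := \<kappa> (i + A + 1) + \<delta>))"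
    by (rule snd_fchain_cong) (use assms in \<open>auto simp: kappa_shift_def fst_fchain A_def\<close>)
  also have "snd ?F (\<lambda>j t. w j (fst ?G j + t)) \<kappa> = snd ?F w \<kappa>"
    by (rule snd_fchain_cong) (auto simp: fst_fchain A_def)
  finally show ?thesis by (simp only: ac_simps)
qed

lemma fst_fchain_append:
  "fst (fchain x r \<delta> i (ks1 @ k # ks2))
     = (\<lambda>j. fst (fchain x r \<delta> i ks1) j + fst (fchain x r \<delta> (i + length ks1 + 1) ks2) j)"
  by (auto simp: fst_fchain fun_eq_iff)

lemma teq_star_fchain_concat_minus_one:
  fixes ks1 ks2 :: "complex list"
  assumes "1 \<le> i" "i + length ks1 + 1 + length ks2 \<le> n - 1"
  shows "teq n x r (star n x r \<delta> (fchain x r \<delta> i ks1) (fchain x r \<delta> (i + length ks1 + 1) ks2))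
                   (fchain x r \<delta> i (ks1 @ [-1] @ ks2))"
proof -
  have "snd (star n x r \<delta> (fchain x r \<delta> i ks1) (fchain x r \<delta> (i + length ks1 + 1) ks2)) w \<kappa>
      = snd (fchain x r \<delta> i (ks1 @ [-1] @ ks2)) w \<kappa>" for w \<kappa>
    using snd_star_fchain_adjacent[OF assms, where w = w and \<kappa> = \<kappa>] snd_fchain_append[of x r \<delta> i ks1 "-1" ks2 w \<kappa>]
    by (simp add: diff_divide_distrib)
  then show ?thesis
    by (simp add: teq_def fst_star fst_fchain_append)
qed

context bracket
begin

lemma teq_star_fchain_concat_zero:
  fixes ks1 ks2 :: "complex list"
  assumes "1 \<le> i" "i + length ks1 + 1 + length ks2 \<le> n - 1"
  shows "teq n x r (star n x r \<delta> (fchain x r \<delta> (i + length ks1 + 1) ks2) (fchain x r \<delta> i ks1))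
                   (fchain x r \<delta> i (ks1 @ [0] @ ks2))"
proof -
  have "snd (star n x r \<delta> (fchain x r \<delta> (i + length ks1 + 1) ks2) (fchain x r \<delta> i ks1)) w \<kappa>
      = snd (fchain x r \<delta> i (ks1 @ [0] @ ks2)) w \<kappa>" for w \<kappa>
  proof -
    let ?a = "w (i + length ks1) 1" and ?b = "w (i + length ks1 + 1) 1"
    have "brk x r (?b - ?a + \<delta> / 2) / brk x r (?b - ?a)
        = brk x r (?a - ?b - (0 + 1/2) * \<delta>) / brk x r (?a - ?b)"
      using brk_minus[of "?a - ?b - \<delta> / 2"] brk_minus[of "?a - ?b"] by (simp add: algebra_simps)
    then show ?thesis
      using snd_star_fchain_adjacent_rev[OF assms, where w = w and \<kappa> = \<kappa>] snd_fchain_append[of x r \<delta> i ks1 0 ks2 w \<kappa>]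
      by (simp only: append_Cons append_Nil mult_zero_left diff_zero fun_upd_triv add_0 add_0_right
                     mult_1 mult_1_right ac_simps)
  qed
  then show ?thesis
    by (simp add: teq_def fst_star fst_fchain_append add.commute)
qed

end

section \<open>The exchange relations\<close>

lemma teq_star_antisymmetric_difference:
  assumes e: "e \<in> {1..n-1}"
    and same_type: "\<And>j. fst F1 j + fst G1 j = fst F2 j + fst G2 j"
    and two: "fst F1 e + fst G1 e = 2" and rest: "\<forall>j\<in>{1..n-1}-{e}. fst F1 j + fst G1 j \<le> 1"
    and integrand1: "\<And>w \<kappa>. star_integrand n x r \<delta> F1 G1 w \<kappa> = L w \<kappa> * R w \<kappa>"
    and integrand2: "\<And>w \<kappa>. star_integrand n x r \<delta> F2 G2 w \<kappa> = L' w \<kappa> * R w \<kappa>"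
    and R_swap: "\<And>w \<kappa>. R (swap_12 e w) \<kappa> = R w \<kappa>"
    and antisym: "\<And>w \<kappa>. L (swap_12 e w) \<kappa> - L' (swap_12 e w) \<kappa> = - (L w \<kappa> - L' w \<kappa>)"
  shows "teq n x r (star n x r \<delta> F1 G1) (star n x r \<delta> F2 G2)"
proof -
  have two2: "fst F2 e + fst G2 e = 2" and rest2: "\<forall>j\<in>{1..n-1}-{e}. fst F2 j + fst G2 j \<le> 1"
    using two rest by (simp_all add: same_type)
  have star_eqs: "snd (star n x r \<delta> F1 G1) w \<kappa> = (L w \<kappa> + L (swap_12 e w) \<kappa>) * R w \<kappa> / 2"
       "snd (star n x r \<delta> F2 G2) w \<kappa> = (L' w \<kappa> + L' (swap_12 e w) \<kappa>) * R w \<kappa> / 2" for w \<kappa>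
    unfolding snd_star_single_two[OF e two rest] snd_star_single_two[OF e two2 rest2]
      integrand1 integrand2 R_swap by (simp_all add: distrib_right)
  have L_sums: "L w \<kappa> + L (swap_12 e w) \<kappa> = L' w \<kappa> + L' (swap_12 e w) \<kappa>" for w \<kappa>
    using antisym[of w \<kappa>] by (simp add: algebra_simps)
  have "snd (star n x r \<delta> F1 G1) w \<kappa> = snd (star n x r \<delta> F2 G2) w \<kappa>" for w \<kappa>
    unfolding star_eqs L_sums ..
  then show ?thesis
    using same_type by (simp add: teq_def fst_star)
qed

lemma star_integrand_Nil_Cons:
  fixes ks :: "complex list"
  assumes "1 \<le> i" "i + length ks + 1 \<le> n - 1"
  shows "star_integrand n x r \<delta> (fchain x r \<delta> i []) (fchain x r \<delta> i (k # ks)) w \<kappa>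
     = brk x r (w i 1 + \<delta>/2 - (\<kappa> i - \<delta>)) * brk x r (w i 2 + \<delta>/2 - (\<kappa> i - k*\<delta>))
     * (brk x r (w i 2 - w (i+1) 1 - (k + 1/2)*\<delta>) / brk x r (w i 2 - w (i+1) 1))
     * (brk x r (w i 1 - w i 2 - \<delta>) / brk x r (w i 1 - w i 2))
     * (brk x r (w i 1 - w (i+1) 1 + \<delta>/2) / brk x r (w i 1 - w (i+1) 1))
     * snd (fchain x r \<delta> (i + 1) ks) w (\<kappa>(i + 1 := \<kappa> (i + 1) + (k + 1) * \<delta>))"
proof -
  let ?P = "fchain x r \<delta> i []" and ?C = "fchain x r \<delta> i (k # ks)"
  have cross: "{j\<in>{1..n-1}. fst ?P j = 1 \<and> fst ?C j = 1} = {i}"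
      "{j\<in>{1..n-2}. fst ?P j = 1 \<and> fst ?C (j+1) = 1} = {i}"
      "{j\<in>{2..n-1}. fst ?P j = 1 \<and> fst ?C (j-1) = 1} = {}"
    using assms by (auto simp: fst_fchain)
  have "kappa_shift n (fst ?C) \<delta> \<kappa> i = \<kappa> i - \<delta>"
    using assms by (auto simp: kappa_shift_def fst_fchain)
  then have P_factor: "snd ?P w (kappa_shift n (fst ?C) \<delta> \<kappa>) = brk x r (w i 1 + \<delta>/2 - (\<kappa> i - \<delta>))"
    by (simp add: snd_fchain_Nil)
  define w' where "w' j t = w j (fst ?P j + t)" for j t
  have "snd (fchain x r \<delta> (i + 1) ks) w' (\<kappa>(i + 1 := \<kappa> (i + 1) + (k + 1) * \<delta>))
      = snd (fchain x r \<delta> (i + 1) ks) w (\<kappa>(i + 1 := \<kappa> (i + 1) + (k + 1) * \<delta>))"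
    by (rule snd_fchain_cong) (auto simp: w'_def fst_fchain)
  then have C_factor: "snd ?C w' \<kappa> = brk x r (w i 2 + \<delta>/2 - (\<kappa> i - k*\<delta>))
      * (brk x r (w i 2 - w (i+1) 1 - (k + 1/2)*\<delta>) / brk x r (w i 2 - w (i+1) 1))
      * snd (fchain x r \<delta> (i + 1) ks) w (\<kappa>(i + 1 := \<kappa> (i + 1) + (k + 1) * \<delta>))"
    using snd_fchain_append[of x r \<delta> i "[]" k ks w' \<kappa>]
    by (simp add: snd_fchain_Nil w'_def fst_fchain numeral_2_eq_2)
  show ?thesis
    unfolding star_integrand_le1[OF fst_fchain_le1 fst_fchain_le1] cross P_factor C_factor[unfolded w'_def]
    by (simp add: fst_fchain mult_ac numeral_2_eq_2)
qed

lemma star_integrand_Cons_Nil: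
  fixes ks :: "complex list"
  assumes "1 \<le> i" "i + length ks + 1 \<le> n - 1"
  shows "star_integrand n x r \<delta> (fchain x r \<delta> i ((k - 1) # ks)) (fchain x r \<delta> i []) w \<kappa>
     = brk x r (w i 1 + \<delta>/2 - (\<kappa> i - 2*\<delta> - (k - 1)*\<delta>))
     * (brk x r (w i 1 - w (i+1) 1 - (k - 1 + 1/2)*\<delta>) / brk x r (w i 1 - w (i+1) 1))
     * brk x r (w i 2 + \<delta>/2 - \<kappa> i)
     * (brk x r (w i 1 - w i 2 - \<delta>) / brk x r (w i 1 - w i 2))
     * (brk x r (w (i+1) 1 - w i 2 + \<delta>/2) / brk x r (w (i+1) 1 - w i 2))
     * snd (fchain x r \<delta> (i + 1) ks) w (\<kappa>(i + 1 := \<kappa> (i + 1) + (k + 1) * \<delta>))"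
proof -
  let ?P = "fchain x r \<delta> i []" and ?C' = "fchain x r \<delta> i ((k - 1) # ks)"
  have cross: "{j\<in>{1..n-1}. fst ?C' j = 1 \<and> fst ?P j = 1} = {i}"
      "{j\<in>{1..n-2}. fst ?C' j = 1 \<and> fst ?P (j+1) = 1} = {}"
      "{j\<in>{2..n-1}. fst ?C' j = 1 \<and> fst ?P (j-1) = 1} = {i + 1}"
    using assms by (auto simp: fst_fchain)
  have P_factor: "snd ?P (\<lambda>j t. w j (fst ?C' j + t)) \<kappa> = brk x r (w i 2 + \<delta>/2 - \<kappa> i)"
    by (simp add: snd_fchain_Nil fst_fchain numeral_2_eq_2)
  define \<kappa>' where "\<kappa>' = kappa_shift n (fst ?P) \<delta> \<kappa>"
  have \<kappa>': "\<kappa>' i = \<kappa> i - 2 * \<delta>" "\<kappa>' (i + 1) = \<kappa> (i + 1) + \<delta>" "\<And>t. t \<ge> 2 \<Longrightarrow> \<kappa>' (i + t) = \<kappa> (i + t)"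
    using assms by (auto simp: \<kappa>'_def kappa_shift_def fst_fchain)
  have "snd (fchain x r \<delta> (i + 1) ks) w (\<kappa>'(i + 1 := \<kappa>' (i + 1) + (k - 1 + 1) * \<delta>))
      = snd (fchain x r \<delta> (i + 1) ks) w (\<kappa>(i + 1 := \<kappa> (i + 1) + (k + 1) * \<delta>))"
  proof (rule snd_fchain_cong)
    fix t
    show "(\<kappa>'(i + 1 := \<kappa>' (i + 1) + (k - 1 + 1) * \<delta>)) (i + 1 + t)
        = (\<kappa>(i + 1 := \<kappa> (i + 1) + (k + 1) * \<delta>)) (i + 1 + t)"
      using \<kappa>'(2) \<kappa>'(3)[of "Suc t"] by (cases t) (auto simp: algebra_simps)
  qed simp
  then have C_factor: "snd ?C' w \<kappa>' = brk x r (w i 1 + \<delta>/2 - (\<kappa> i - 2*\<delta> - (k - 1)*\<delta>))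
      * (brk x r (w i 1 - w (i+1) 1 - (k - 1 + 1/2)*\<delta>) / brk x r (w i 1 - w (i+1) 1))
      * snd (fchain x r \<delta> (i + 1) ks) w (\<kappa>(i + 1 := \<kappa> (i + 1) + (k + 1) * \<delta>))"
    using snd_fchain_append[of x r \<delta> i "[]" "k - 1" ks w \<kappa>']
    by (simp add: snd_fchain_Nil \<kappa>'(1))
  show ?thesis
    unfolding star_integrand_le1[OF fst_fchain_le1 fst_fchain_le1] cross P_factor C_factor[unfolded \<kappa>'_def]
    by (simp add: fst_fchain mult_ac numeral_2_eq_2)
qed

lemma star_integrand_Nil_snoc:
  fixes ks :: "complex list" and i :: nat
  defines "A \<equiv> length ks"
  assumes "1 \<le> i" "i + A + 1 \<le> n - 1"
  shows "star_integrand n x r \<delta> (fchain x r \<delta> (i + A + 1) []) (fchain x r \<delta> i (ks @ [k - 1])) w \<kappa>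
     = brk x r (w (i+A+1) 1 + \<delta>/2 - (\<kappa> (i+A+1) - \<delta>))
     * (brk x r (w (i+A) 1 - w (i+A+1) 2 - (k - 1 + 1/2)*\<delta>) / brk x r (w (i+A) 1 - w (i+A+1) 2))
     * brk x r (w (i+A+1) 2 + \<delta>/2 - (\<kappa> (i+A+1) + (k - 1 + 1)*\<delta>))
     * (brk x r (w (i+A+1) 1 - w (i+A+1) 2 - \<delta>) / brk x r (w (i+A+1) 1 - w (i+A+1) 2))
     * (brk x r (w (i+A+1) 1 - w (i+A) 1 + \<delta>/2) / brk x r (w (i+A+1) 1 - w (i+A) 1))
     * snd (fchain x r \<delta> i ks) w (\<kappa>(i + A := \<kappa> (i + A) - (k - 1) * \<delta>))"
proof -
  let ?P = "fchain x r \<delta> (i + A + 1) []" and ?C = "fchain x r \<delta> i (ks @ [k - 1])"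
  have cross: "{j\<in>{1..n-1}. fst ?P j = 1 \<and> fst ?C j = 1} = {i + A + 1}"
      "{j\<in>{1..n-2}. fst ?P j = 1 \<and> fst ?C (j+1) = 1} = {}"
      "{j\<in>{2..n-1}. fst ?P j = 1 \<and> fst ?C (j-1) = 1} = {i + A + 1}"
    using assms(2,3) by (auto simp: fst_fchain A_def)
  have "kappa_shift n (fst ?C) \<delta> \<kappa> (i + A + 1) = \<kappa> (i + A + 1) - \<delta>"
    using assms(2,3) by (auto simp: kappa_shift_def fst_fchain A_def)
  then have P_factor: "snd ?P w (kappa_shift n (fst ?C) \<delta> \<kappa>) = brk x r (w (i+A+1) 1 + \<delta>/2 - (\<kappa> (i+A+1) - \<delta>))"
    by (simp add: snd_fchain_Nil)
  define w' where "w' j t = w j (fst ?P j + t)" for j t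
  have "snd (fchain x r \<delta> i ks) w' (\<kappa>(i + A := \<kappa> (i + A) - (k - 1) * \<delta>))
      = snd (fchain x r \<delta> i ks) w (\<kappa>(i + A := \<kappa> (i + A) - (k - 1) * \<delta>))"
    by (rule snd_fchain_cong) (auto simp: w'_def fst_fchain A_def)
  then have C_factor: "snd ?C w' \<kappa> = snd (fchain x r \<delta> i ks) w (\<kappa>(i + A := \<kappa> (i + A) - (k - 1) * \<delta>))
      * (brk x r (w (i+A) 1 - w (i+A+1) 2 - (k - 1 + 1/2)*\<delta>) / brk x r (w (i+A) 1 - w (i+A+1) 2))
      * brk x r (w (i+A+1) 2 + \<delta>/2 - (\<kappa> (i+A+1) + (k - 1 + 1)*\<delta>))"
    using snd_fchain_append[of x r \<delta> i ks "k - 1" "[]" w' \<kappa>]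
    by (simp add: snd_fchain_Nil w'_def fst_fchain A_def numeral_2_eq_2)
  show ?thesis
    unfolding star_integrand_le1[OF fst_fchain_le1 fst_fchain_le1] cross P_factor C_factor[unfolded w'_def]
    by (simp add: fst_fchain A_def mult_ac numeral_2_eq_2)
qed

lemma star_integrand_snoc_Nil:
  fixes ks :: "complex list" and i :: nat
  defines "A \<equiv> length ks"
  assumes "1 \<le> i" "i + A + 1 \<le> n - 1"
  shows "star_integrand n x r \<delta> (fchain x r \<delta> i (ks @ [k])) (fchain x r \<delta> (i + A + 1) []) w \<kappa>
     = (brk x r (w (i+A) 1 - w (i+A+1) 1 - (k + 1/2)*\<delta>) / brk x r (w (i+A) 1 - w (i+A+1) 1))
     * brk x r (w (i+A+1) 1 + \<delta>/2 - (\<kappa> (i+A+1) - 2*\<delta> + (k + 1)*\<delta>))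
     * brk x r (w (i+A+1) 2 + \<delta>/2 - \<kappa> (i+A+1))
     * (brk x r (w (i+A+1) 1 - w (i+A+1) 2 - \<delta>) / brk x r (w (i+A+1) 1 - w (i+A+1) 2))
     * (brk x r (w (i+A) 1 - w (i+A+1) 2 + \<delta>/2) / brk x r (w (i+A) 1 - w (i+A+1) 2))
     * snd (fchain x r \<delta> i ks) w (\<kappa>(i + A := \<kappa> (i + A) - (k - 1) * \<delta>))"
proof -
  let ?P = "fchain x r \<delta> (i + A + 1) []" and ?C' = "fchain x r \<delta> i (ks @ [k])"
  have cross: "{j\<in>{1..n-1}. fst ?C' j = 1 \<and> fst ?P j = 1} = {i + A + 1}"
      "{j\<in>{1..n-2}. fst ?C' j = 1 \<and> fst ?P (j+1) = 1} = {i + A}"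
      "{j\<in>{2..n-1}. fst ?C' j = 1 \<and> fst ?P (j-1) = 1} = {}"
    using assms(2,3) by (auto simp: fst_fchain A_def)
  have P_factor: "snd ?P (\<lambda>j t. w j (fst ?C' j + t)) \<kappa> = brk x r (w (i+A+1) 2 + \<delta>/2 - \<kappa> (i+A+1))"
    by (simp add: snd_fchain_Nil fst_fchain A_def numeral_2_eq_2)
  define \<kappa>' where "\<kappa>' = kappa_shift n (fst ?P) \<delta> \<kappa>"
  have \<kappa>': "\<kappa>' (i + A + 1) = \<kappa> (i + A + 1) - 2 * \<delta>" "\<kappa>' (i + A) = \<kappa> (i + A) + \<delta>"
      "\<And>t. t < A \<Longrightarrow> \<kappa>' (i + t) = \<kappa> (i + t)"
    using assms(2,3) by (auto simp: \<kappa>'_def kappa_shift_def fst_fchain)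
  have "snd (fchain x r \<delta> i ks) w (\<kappa>'(i + A := \<kappa>' (i + A) - k * \<delta>))
      = snd (fchain x r \<delta> i ks) w (\<kappa>(i + A := \<kappa> (i + A) - (k - 1) * \<delta>))"
  proof (rule snd_fchain_cong)
    fix t assume "t \<le> length ks"
    then consider "t = A" | "t < A" by (fastforce simp: A_def)
    then show "(\<kappa>'(i + A := \<kappa>' (i + A) - k * \<delta>)) (i + t) = (\<kappa>(i + A := \<kappa> (i + A) - (k - 1) * \<delta>)) (i + t)"
      by cases (simp_all add: \<kappa>' left_diff_distrib)
  qed simp
  then have C_factor: "snd ?C' w \<kappa>' = snd (fchain x r \<delta> i ks) w (\<kappa>(i + A := \<kappa> (i + A) - (k - 1) * \<delta>))
      * (brk x r (w (i+A) 1 - w (i+A+1) 1 - (k + 1/2)*\<delta>) / brk x r (w (i+A) 1 - w (i+A+1) 1))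
      * brk x r (w (i+A+1) 1 + \<delta>/2 - (\<kappa> (i+A+1) - 2*\<delta> + (k + 1)*\<delta>))"
    using snd_fchain_append[of x r \<delta> i ks k "[]" w \<kappa>'] \<kappa>'(1)[unfolded A_def]
    by (simp add: snd_fchain_Nil A_def)
  show ?thesis
    unfolding star_integrand_le1[OF fst_fchain_le1 fst_fchain_le1] cross P_factor C_factor[unfolded \<kappa>'_def]
    by (simp add: fst_fchain A_def mult_ac numeral_2_eq_2)
qed

context bracket
begin

abbreviation (input) B :: "complex \<Rightarrow> complex" where
  "B \<equiv> brk x r"

lemma brk_exchange_head:
  "B (a + d/2 - (K - d)) * B (b + d/2 - (K - k*d)) * (B (b - c - (k + 1/2)*d) / B (b - c))
     * (B (a - b - d) / B (a - b)) * (B (a - c + d/2) / B (a - c))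
   - B (a + d/2 - (K - 2*d - (k - 1)*d)) * (B (a - c - (k - 1 + 1/2)*d) / B (a - c)) * B (b + d/2 - K)
     * (B (a - b - d) / B (a - b)) * (B (c - b + d/2) / B (c - b))
   = B (a - b - d) * B (a - b + d) * B (a + b - c - K + d) * B (- (k*d)) * B (c - K + (1 + k)*d)
     / (B (a - b) * B (a - c) * B (b - c))"
proof -
  txt \<open>The substitution makes the three terms of the identity the two numerators and the difference.\<close>
  define X where "X = (a + b - c - K + (1 - k)*d) / 2"
  define Y where "Y = (a - b + c - K + (2 + k)*d) / 2"
  define U where "U = (a + b - c - K + (1 + k)*d) / 2"
  define V where "V = (a - b - c + K - k*d) / 2"
  have sums: "X + Y = a + d/2 - (K - d)" "X - Y = b - c - (k + 1/2)*d" "U + V = a - c + d/2"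
     "U - V = b + d/2 - (K - k*d)" "X + U = a + b - c - K + d" "X - U = - (k*d)" "Y + V = a - b + d"
     "Y - V = c - K + (1 + k)*d" "X + V = a - c - (k - 1 + 1/2)*d" "X - V = b + d/2 - K"
     "Y + U = a + d/2 - (K - 2*d - (k - 1)*d)" "Y - U = c - b + d/2"
    unfolding X_def Y_def U_def V_def by (simp_all add: field_simps)
  have "B (X + Y) * B (X - Y) * (B (U + V) * B (U - V)) - B (X + U) * B (X - U) * (B (Y + V) * B (Y - V))
      + B (X + V) * B (X - V) * (B (Y + U) * B (Y - U)) = 0"
    by (rule brk_three_term)
  then have E: "B (X + Y) * B (X - Y) * (B (U + V) * B (U - V)) + B (X + V) * B (X - V) * (B (Y + U) * B (Y - U))
      = B (X + U) * B (X - U) * (B (Y + V) * B (Y - V))"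
    by (simp add: algebra_simps)
  have "B (c - b) = - B (b - c)"
    using brk_minus[of "b - c"] by simp
  then have "?thesis \<longleftrightarrow>
      (B (X + Y) * B (X - Y) * (B (U + V) * B (U - V)) + B (X + V) * B (X - V) * (B (Y + U) * B (Y - U)))
        * B (a - b - d) / (B (a - b) * B (a - c) * B (b - c))
    = B (X + U) * B (X - U) * (B (Y + V) * B (Y - V)) * B (a - b - d) / (B (a - b) * B (a - c) * B (b - c))"
    unfolding sums[symmetric] by (simp add: add_divide_distrib algebra_simps)
  then show ?thesis
    unfolding E by simp
qed

lemma brk_exchange_last:
  "B (a + d/2 - (K - d)) * (B (c - b - (k - 1 + 1/2)*d) / B (c - b)) * B (b + d/2 - (K + (k - 1 + 1)*d))
     * (B (a - b - d) / B (a - b)) * (B (a - c + d/2) / B (a - c))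
   - (B (c - a - (k + 1/2)*d) / B (c - a)) * B (a + d/2 - (K - 2*d + (k + 1)*d)) * B (b + d/2 - K)
     * (B (a - b - d) / B (a - b)) * (B (c - b + d/2) / B (c - b))
   = - (B (a - b - d) * B (a - b + d) * B (a + b - c - K + d) * B (k*d) * B (c - K + (1 - k)*d)
     / (B (a - b) * B (a - c) * B (c - b)))"
proof -
  define X where "X = (a + b - c - K + (1 + k)*d) / 2"
  define Y where "Y = (a - b + c - K + (2 - k)*d) / 2"
  define U where "U = (a + b - c - K + (1 - k)*d) / 2"
  define V where "V = (a - b - c + K + k*d) / 2"
  have sums: "X + Y = a + d/2 - (K - d)" "Y - X = c - b - (k - 1 + 1/2)*d" "U + V = a - c + d/2"
     "U - V = b + d/2 - (K + (k - 1 + 1)*d)" "X + U = a + b - c - K + d" "X - U = k*d" "Y + V = a - b + d"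
     "Y - V = c - K + (1 - k)*d" "- X - V = c - a - (k + 1/2)*d" "X - V = b + d/2 - K"
     "Y + U = a + d/2 - (K - 2*d + (k + 1)*d)" "Y - U = c - b + d/2"
    unfolding X_def Y_def U_def V_def by (simp_all add: field_simps)
  have "B (X + Y) * B (X - Y) * (B (U + V) * B (U - V)) - B (X + U) * B (X - U) * (B (Y + V) * B (Y - V))
      + B (X + V) * B (X - V) * (B (Y + U) * B (Y - U)) = 0"
    by (rule brk_three_term)
  then have E: "B (X + Y) * B (X - Y) * (B (U + V) * B (U - V)) + B (X + V) * B (X - V) * (B (Y + U) * B (Y - U))
      = B (X + U) * B (X - U) * (B (Y + V) * B (Y - V))"
    by (simp add: algebra_simps)
  have "B (Y - X) = - B (X - Y)" "B (- X - V) = - B (X + V)" "B (c - a) = - B (a - c)"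
    using brk_minus[of "X - Y"] brk_minus[of "X + V"] brk_minus[of "a - c"] by simp_all
  then have "?thesis \<longleftrightarrow>
      - ((B (X + Y) * B (X - Y) * (B (U + V) * B (U - V)) + B (X + V) * B (X - V) * (B (Y + U) * B (Y - U)))
          * B (a - b - d) / (B (a - b) * B (a - c) * B (c - b)))
    = - (B (X + U) * B (X - U) * (B (Y + V) * B (Y - V)) * B (a - b - d) / (B (a - b) * B (a - c) * B (c - b)))"
    unfolding sums[symmetric] by (simp add: add_divide_distrib algebra_simps)
  then show ?thesis
    unfolding E by simp
qed

lemma brk_exchange_head_antisym:
  fixes c K k d :: complex
  defines "L \<equiv> \<lambda>a b. B (a + d/2 - (K - d)) * B (b + d/2 - (K - k*d)) * (B (b - c - (k + 1/2)*d) / B (b - c))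
                      * (B (a - b - d) / B (a - b)) * (B (a - c + d/2) / B (a - c))"
    and "L' \<equiv> \<lambda>a b. B (a + d/2 - (K - 2*d - (k - 1)*d)) * (B (a - c - (k - 1 + 1/2)*d) / B (a - c))
                      * B (b + d/2 - K) * (B (a - b - d) / B (a - b)) * (B (c - b + d/2) / B (c - b))"
  shows "L b a - L' b a = - (L a b - L' a b)"
proof -
  have "L b a - L' b a = B (b - a - d) * B (b - a + d) * B (b + a - c - K + d) * B (- (k*d))
      * B (c - K + (1 + k)*d) / (B (b - a) * B (b - c) * B (a - c))"
    unfolding L_def L'_def by (rule brk_exchange_head)
  also have "\<dots> = - (B (a - b - d) * B (a - b + d) * B (a + b - c - K + d) * B (- (k*d))
      * B (c - K + (1 + k)*d) / (B (a - b) * B (a - c) * B (b - c)))"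
    using brk_minus[of "a - b + d"] brk_minus[of "a - b - d"] brk_minus[of "a - b"]
    by (simp add: algebra_simps)
  also have "\<dots> = - (L a b - L' a b)"
    unfolding L_def L'_def by (simp only: brk_exchange_head)
  finally show ?thesis .
qed

lemma brk_exchange_last_antisym:
  fixes c K k d :: complex
  defines "L \<equiv> \<lambda>a b. B (a + d/2 - (K - d)) * (B (c - b - (k - 1 + 1/2)*d) / B (c - b))
                      * B (b + d/2 - (K + (k - 1 + 1)*d)) * (B (a - b - d) / B (a - b)) * (B (a - c + d/2) / B (a - c))"
    and "L' \<equiv> \<lambda>a b. (B (c - a - (k + 1/2)*d) / B (c - a)) * B (a + d/2 - (K - 2*d + (k + 1)*d))
                      * B (b + d/2 - K) * (B (a - b - d) / B (a - b)) * (B (c - b + d/2) / B (c - b))"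
  shows "L b a - L' b a = - (L a b - L' a b)"
proof -
  have "L b a - L' b a = - (B (b - a - d) * B (b - a + d) * B (b + a - c - K + d) * B (k*d)
      * B (c - K + (1 - k)*d) / (B (b - a) * B (b - c) * B (c - a)))"
    unfolding L_def L'_def by (rule brk_exchange_last)
  also have "\<dots> = - (- (B (a - b - d) * B (a - b + d) * B (a + b - c - K + d) * B (k*d)
      * B (c - K + (1 - k)*d) / (B (a - b) * B (a - c) * B (c - b))))"
    using brk_minus[of "a - b + d"] brk_minus[of "a - b - d"] brk_minus[of "a - b"]
      brk_minus[of "a - c"] brk_minus[of "c - b"]
    by (simp add: algebra_simps)
  also have "\<dots> = - (L a b - L' a b)"
    unfolding L_def L'_def by (simp only: brk_exchange_last)
  finally show ?thesis .
qed

lemma teq_star_fchain_exchange_head: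
  fixes ks :: "complex list"
  assumes "1 \<le> i" "i + length ks + 1 \<le> n - 1"
  shows "teq n x r (star n x r \<delta> (fchain x r \<delta> i []) (fchain x r \<delta> i (k # ks)))
                   (star n x r \<delta> (fchain x r \<delta> i ((k - 1) # ks)) (fchain x r \<delta> i []))"
proof -
  define L where "L w \<kappa> =
      B (w i 1 + \<delta>/2 - (\<kappa> i - \<delta>)) * B (w i 2 + \<delta>/2 - (\<kappa> i - k*\<delta>))
    * (B (w i 2 - w (i+1) 1 - (k + 1/2)*\<delta>) / B (w i 2 - w (i+1) 1))
    * (B (w i 1 - w i 2 - \<delta>) / B (w i 1 - w i 2)) * (B (w i 1 - w (i+1) 1 + \<delta>/2) / B (w i 1 - w (i+1) 1))"
    for w :: "nat \<Rightarrow> nat \<Rightarrow> complex" and \<kappa> :: "nat \<Rightarrow> complex"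
  define L' where "L' w \<kappa> =
      B (w i 1 + \<delta>/2 - (\<kappa> i - 2*\<delta> - (k - 1)*\<delta>)) * (B (w i 1 - w (i+1) 1 - (k - 1 + 1/2)*\<delta>) / B (w i 1 - w (i+1) 1))
    * B (w i 2 + \<delta>/2 - \<kappa> i)
    * (B (w i 1 - w i 2 - \<delta>) / B (w i 1 - w i 2)) * (B (w (i+1) 1 - w i 2 + \<delta>/2) / B (w (i+1) 1 - w i 2))"
    for w :: "nat \<Rightarrow> nat \<Rightarrow> complex" and \<kappa> :: "nat \<Rightarrow> complex"
  define R where "R w \<kappa> = snd (fchain x r \<delta> (i + 1) ks) w (\<kappa>(i + 1 := \<kappa> (i + 1) + (k + 1) * \<delta>))" for w \<kappa>
  show ?thesis
  proof (rule teq_star_antisymmetric_difference[where e = i and L = L and L' = L' and R = R])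
    show "i \<in> {1..n-1}" "fst (fchain x r \<delta> i []) i + fst (fchain x r \<delta> i (k # ks)) i = 2"
      "\<forall>j\<in>{1..n-1}-{i}. fst (fchain x r \<delta> i []) j + fst (fchain x r \<delta> i (k # ks)) j \<le> 1"
      using assms by (auto simp: fst_fchain)
    show "fst (fchain x r \<delta> i []) j + fst (fchain x r \<delta> i (k # ks)) j
        = fst (fchain x r \<delta> i ((k - 1) # ks)) j + fst (fchain x r \<delta> i []) j" for j
      by (simp add: fst_fchain)
    show "star_integrand n x r \<delta> (fchain x r \<delta> i []) (fchain x r \<delta> i (k # ks)) w \<kappa> = L w \<kappa> * R w \<kappa>"
      "star_integrand n x r \<delta> (fchain x r \<delta> i ((k - 1) # ks)) (fchain x r \<delta> i []) w \<kappa> = L' w \<kappa> * R w \<kappa>" for w \<kappa>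
      unfolding L_def L'_def R_def by (rule star_integrand_Nil_Cons[OF assms] star_integrand_Cons_Nil[OF assms])+
    show "R (swap_12 i w) \<kappa> = R w \<kappa>" for w \<kappa>
      unfolding R_def by (rule snd_fchain_cong) auto
    show "L (swap_12 i w) \<kappa> - L' (swap_12 i w) \<kappa> = - (L w \<kappa> - L' w \<kappa>)" for w \<kappa>
    proof -
      have "swap_12 i w i 1 = w i 2" "swap_12 i w i 2 = w i 1" "swap_12 i w (i + 1) 1 = w (i + 1) 1"
        by (simp_all add: swap_12_def Transposition.transpose_def)
      then show ?thesis
        unfolding L_def L'_def by (simp only:) (rule brk_exchange_head_antisym)
    qed
  qed
qed

lemma teq_star_fchain_exchange_last:
  fixes ks :: "complex list" and i :: nat
  defines "e \<equiv> i + length ks + 1"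
  assumes "1 \<le> i" "e \<le> n - 1"
  shows "teq n x r (star n x r \<delta> (fchain x r \<delta> e []) (fchain x r \<delta> i (ks @ [k - 1])))
                   (star n x r \<delta> (fchain x r \<delta> i (ks @ [k])) (fchain x r \<delta> e []))"
proof -
  define A where "A = length ks"
  have e: "e = i + A + 1"
    by (simp add: e_def A_def)
  define L where "L w \<kappa> =
      B (w e 1 + \<delta>/2 - (\<kappa> e - \<delta>)) * (B (w (i+A) 1 - w e 2 - (k - 1 + 1/2)*\<delta>) / B (w (i+A) 1 - w e 2))
    * B (w e 2 + \<delta>/2 - (\<kappa> e + (k - 1 + 1)*\<delta>))
    * (B (w e 1 - w e 2 - \<delta>) / B (w e 1 - w e 2)) * (B (w e 1 - w (i+A) 1 + \<delta>/2) / B (w e 1 - w (i+A) 1))"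
    for w :: "nat \<Rightarrow> nat \<Rightarrow> complex" and \<kappa> :: "nat \<Rightarrow> complex"
  define L' where "L' w \<kappa> =
      (B (w (i+A) 1 - w e 1 - (k + 1/2)*\<delta>) / B (w (i+A) 1 - w e 1))
    * B (w e 1 + \<delta>/2 - (\<kappa> e - 2*\<delta> + (k + 1)*\<delta>)) * B (w e 2 + \<delta>/2 - \<kappa> e)
    * (B (w e 1 - w e 2 - \<delta>) / B (w e 1 - w e 2)) * (B (w (i+A) 1 - w e 2 + \<delta>/2) / B (w (i+A) 1 - w e 2))"
    for w :: "nat \<Rightarrow> nat \<Rightarrow> complex" and \<kappa> :: "nat \<Rightarrow> complex"
  define R where "R w \<kappa> = snd (fchain x r \<delta> i ks) w (\<kappa>(i + A := \<kappa> (i + A) - (k - 1) * \<delta>))" for w \<kappa>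
  have bounds: "1 \<le> i" "i + A + 1 \<le> n - 1"
    using assms by (simp_all add: e_def A_def)
  show ?thesis
  proof (rule teq_star_antisymmetric_difference[where e = e and L = L and L' = L' and R = R])
    show "e \<in> {1..n-1}" "fst (fchain x r \<delta> e []) e + fst (fchain x r \<delta> i (ks @ [k - 1])) e = 2"
      "\<forall>j\<in>{1..n-1}-{e}. fst (fchain x r \<delta> e []) j + fst (fchain x r \<delta> i (ks @ [k - 1])) j \<le> 1"
      using bounds by (auto simp: fst_fchain e A_def)
    show "fst (fchain x r \<delta> e []) j + fst (fchain x r \<delta> i (ks @ [k - 1])) j
        = fst (fchain x r \<delta> i (ks @ [k])) j + fst (fchain x r \<delta> e []) j" for j
      by (simp add: fst_fchain)
    show "star_integrand n x r \<delta> (fchain x r \<delta> e []) (fchain x r \<delta> i (ks @ [k - 1])) w \<kappa> = L w \<kappa> * R w \<kappa>"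
      "star_integrand n x r \<delta> (fchain x r \<delta> i (ks @ [k])) (fchain x r \<delta> e []) w \<kappa> = L' w \<kappa> * R w \<kappa>" for w \<kappa>
      unfolding L_def L'_def R_def e A_def
      by (rule star_integrand_Nil_snoc[OF bounds[unfolded A_def]] star_integrand_snoc_Nil[OF bounds[unfolded A_def]])+
    show "R (swap_12 e w) \<kappa> = R w \<kappa>" for w \<kappa>
      unfolding R_def by (rule snd_fchain_cong) (auto simp: e A_def)
    show "L (swap_12 e w) \<kappa> - L' (swap_12 e w) \<kappa> = - (L w \<kappa> - L' w \<kappa>)" for w \<kappa>
    proof -
      have "swap_12 e w e 1 = w e 2" "swap_12 e w e 2 = w e 1" "swap_12 e w (i + A) 1 = w (i + A) 1"
        by (simp_all add: swap_12_def Transposition.transpose_def e)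
      then show ?thesis
        unfolding L_def L'_def by (simp only:) (rule brk_exchange_last_antisym)
    qed
  qed
qed

end

theorem lemmaB4:
  fixes n r :: nat and x :: real and \<delta> :: complex
  assumes "n \<ge> 2" and "r > 0" and "0 < x" and "x < 1"
  shows
   "(\<forall>i l m (ks1::complex list) ks2. 1 \<le> i \<longrightarrow> 1 \<le> l \<longrightarrow> length ks1 = l - 1 \<longrightarrow> length ks2 = m
       \<longrightarrow> i + l + m \<le> n - 1 \<longrightarrow>
       teq n x r (star n x r \<delta> (fchain x r \<delta> i ks1) (fchain x r \<delta> (i + l) ks2))
                 (fchain x r \<delta> i (ks1 @ [-1] @ ks2)))
  \<and> (\<forall>i l m (ks1::complex list) ks2. 1 \<le> i \<longrightarrow> 1 \<le> l \<longrightarrow> length ks1 = l - 1 \<longrightarrow> length ks2 = m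
       \<longrightarrow> i + l + m \<le> n - 1 \<longrightarrow>
       teq n x r (star n x r \<delta> (fchain x r \<delta> (i + l) ks2) (fchain x r \<delta> i ks1))
                 (fchain x r \<delta> i (ks1 @ [0] @ ks2)))
  \<and> (\<forall>i m (k1::complex) ks. 1 \<le> i \<longrightarrow> 1 \<le> m \<longrightarrow> length ks = m - 1 \<longrightarrow> i + m \<le> n - 1 \<longrightarrow>
       teq n x r (star n x r \<delta> (fchain x r \<delta> i []) (fchain x r \<delta> i (k1 # ks)))
                 (star n x r \<delta> (fchain x r \<delta> i ((k1 - 1) # ks)) (fchain x r \<delta> i [])))
  \<and> (\<forall>i m ks (km::complex). 1 \<le> i \<longrightarrow> 1 \<le> m \<longrightarrow> length ks = m - 1 \<longrightarrow> i + m \<le> n - 1 \<longrightarrow>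
       teq n x r (star n x r \<delta> (fchain x r \<delta> (i + m) []) (fchain x r \<delta> i (ks @ [km - 1])))
                 (star n x r \<delta> (fchain x r \<delta> i (ks @ [km])) (fchain x r \<delta> (i + m) [])))
  \<and> (\<forall>i m j l (ks::complex list) ks'. 1 \<le> i \<longrightarrow> length ks = m \<longrightarrow> length ks' = l
       \<longrightarrow> i + m + 1 < j \<longrightarrow> j + l \<le> n - 1 \<longrightarrow>
       teq n x r (star n x r \<delta> (fchain x r \<delta> i ks) (fchain x r \<delta> j ks'))
                 (star n x r \<delta> (fchain x r \<delta> j ks') (fchain x r \<delta> i ks)))"
proof -
  interpret bracket x r
    using assms by unfold_locales auto
  show ?thesis
  proof (intro conjI allI impI)
    fix i l m :: nat and ks1 ks2 :: "complex list"
    assume "1 \<le> i" "1 \<le> l" "length ks1 = l - 1" "length ks2 = m" "i + l + m \<le> n - 1"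
    then have "i + l = i + length ks1 + 1" and bound: "i + length ks1 + 1 + length ks2 \<le> n - 1"
      by simp_all
    then show "teq n x r (star n x r \<delta> (fchain x r \<delta> i ks1) (fchain x r \<delta> (i + l) ks2))
        (fchain x r \<delta> i (ks1 @ [-1] @ ks2))"
      and "teq n x r (star n x r \<delta> (fchain x r \<delta> (i + l) ks2) (fchain x r \<delta> i ks1))
        (fchain x r \<delta> i (ks1 @ [0] @ ks2))"
      using teq_star_fchain_concat_minus_one[OF \<open>1 \<le> i\<close> bound]
        teq_star_fchain_concat_zero[OF \<open>1 \<le> i\<close> bound] by simp_all
  next
    fix i m :: nat and k :: complex and ks :: "complex list"
    assume "1 \<le> i" "1 \<le> m" "length ks = m - 1" "i + m \<le> n - 1"
    then have "i + m = i + length ks + 1" and bound: "i + length ks + 1 \<le> n - 1"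
      by simp_all
    then show "teq n x r (star n x r \<delta> (fchain x r \<delta> i []) (fchain x r \<delta> i (k # ks)))
        (star n x r \<delta> (fchain x r \<delta> i ((k - 1) # ks)) (fchain x r \<delta> i []))"
      and "teq n x r (star n x r \<delta> (fchain x r \<delta> (i + m) []) (fchain x r \<delta> i (ks @ [k - 1])))
        (star n x r \<delta> (fchain x r \<delta> i (ks @ [k])) (fchain x r \<delta> (i + m) []))"
      using teq_star_fchain_exchange_head[OF \<open>1 \<le> i\<close> bound]
        teq_star_fchain_exchange_last[OF \<open>1 \<le> i\<close> bound] by simp_all
  next
    fix i m j l :: nat and ks ks' :: "complex list"
    assume "length ks = m" "i + m + 1 < j"
    then show "teq n x r (star n x r \<delta> (fchain x r \<delta> i ks) (fchain x r \<delta> j ks'))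
        (star n x r \<delta> (fchain x r \<delta> j ks') (fchain x r \<delta> i ks))"
      by (simp add: teq_star_fchain_separated)
  qed
qed

end
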